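(* Let $n\ge1$ and $u\ge0$ be integers. Then $$\sum_{W:\ L^{\mathrm{p2hlr}}_n(W)\le u}\mathrm{wt}(W)=\Big(\prod_{i=1}^n x_i\Big)^u\sum_{\lambda:\ \lambda_1\le u,\ \ell(\lambda)\le n} sp_\lambda(x_1^{\pm},\dots,x_n^{\pm}),$$ where the left sum runs over all fillings of $D^{\mathrm{p2hlr}}_n$ by non-negative integers with $L^{\mathrm{p2hlr}}_n(W)\le u$.
   Context: $D^{\mathrm{p2hlr}}_n=\{(i,j)\in\mathbb{Z}^2: 1\le i\le j,\ i+j\le 2n+1\}$ (unit squares; $i$ = column, $j$ = row). A filling $W=(w_{i,j})$ assigns non-negative integers to squares. Column $i$ carries $x_i$; row $j$ carries $y_j=x_j$ if $j\le n$ and $y_j=x_{2n-j+1}$ if $j>n$. $\mathrm{wt}(W)=\prod_{i\ne j}(x_iy_j)^{w_{i,j}}\prod_{i}x_i^{w_{i,i}}$. $L^{\mathrm{p2hlr}}_n(W)$ is the maximum over up-right paths (unit steps right or up) in the domain from $(1,1)$ to a square with $i+j=2n+1$ of the sum of the $w_{i,j}$ along the path. For a partition $\lambda$ with $\ell(\lambda)\le n$, the symplectic character is $sp_\lambda(x_1^\pm,\dots,x_n^\pm)=\sum_T\prod_{i=1}^n x_i^{\#\{i\text{ in }T\}-\#\{\bar i\text{ in }T\}}$, the sum over King symplectic tableaux $T$ of shape $\lambda$: fillings of the Young diagram of $\lambda$ with the ordered alphabet $1<\bar1<2<\bar2<\dots<n<\bar n$, weakly increasing along rows, strictly increasing down columns,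 such that every entry in row $r$ is $\ge r$ (i.e. $\ge$ the letter $r$). $\lambda_1$ is the largest part and $\ell(\lambda)$ the number of nonzero parts. *)

theory Defs
  imports Main
begin

text \<open>The domain D^{p2hlr}_n: squares (i,j) with i = column, j = row.\<close>
definition Dp2hlr :: "nat \<Rightarrow> (nat \<times> nat) set" where
  "Dp2hlr n = {(i, j). 1 \<le> i \<and> i \<le> j \<and> i + j \<le> 2 * n + 1}"

definition fillings :: "nat \<Rightarrow> (nat \<times> nat \<Rightarrow> nat) set" where
  "fillings n = {W. \<forall>p. p \<notin> Dp2hlr n \<longrightarrow> W p = 0}"

definition yvar :: "nat \<Rightarrow> (nat \<Rightarrow> 'a) \<Rightarrow> nat \<Rightarrow> 'a" where
  "yvar n x j = (if j \<le> n then x j else x (2 * n + 1 - j))"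

definition wt :: "nat \<Rightarrow> (nat \<Rightarrow> 'a::comm_monoid_mult) \<Rightarrow> (nat \<times> nat \<Rightarrow> nat) \<Rightarrow> 'a" where
  "wt n x W = (\<Prod>(i, j)\<in>Dp2hlr n.
      (if i \<noteq> j then (x i * yvar n x j) ^ W (i, j) else x i ^ W (i, i)))"

definition up_right_step :: "nat \<times> nat \<Rightarrow> nat \<times> nat \<Rightarrow> bool" where
  "up_right_step p q \<longleftrightarrow> q = (fst p + 1, snd p) \<or> q = (fst p, snd p + 1)"

definition p2hlr_paths :: "nat \<Rightarrow> (nat \<times> nat) list set" where
  "p2hlr_paths n = {ps. ps \<noteq> [] \<and> hd ps = (1, 1) \<and>
       fst (last ps) + snd (last ps) = 2 * n + 1 \<and>
       set ps \<subseteq> Dp2hlr n \<and>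
       (\<forall>k. Suc k < length ps \<longrightarrow> up_right_step (ps ! k) (ps ! Suc k))}"

definition Lp2hlr :: "nat \<Rightarrow> (nat \<times> nat \<Rightarrow> nat) \<Rightarrow> nat" where
  "Lp2hlr n W = Max ((\<lambda>ps. sum_list (map W ps)) ` p2hlr_paths n)"

text \<open>Partitions with at most n parts, as functions r \<mapsto> \<lambda>_r (rows indexed from 1).\<close>
definition partitions_le :: "nat \<Rightarrow> (nat \<Rightarrow> nat) set" where
  "partitions_le n = {lam. lam 0 = 0 \<and> (\<forall>r. r > n \<longrightarrow> lam r = 0) \<and>
                         (\<forall>r. 1 \<le> r \<longrightarrow> lam (Suc r) \<le> lam r)}"

definition cells :: "(nat \<Rightarrow> nat) \<Rightarrow> (nat \<times> nat) set" where
  "cells lam = {(r, c). 1 \<le> r \<and> 1 \<le> c \<and> c \<le> lam r}"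

text \<open>Letters of the alphabet 1 < 1bar < 2 < 2bar < ... < n < nbar are encoded
  as natural numbers: letter i is 2i-1 and letter ibar is 2i, so the encoding is
  order preserving.\<close>
definition king_tableaux :: "nat \<Rightarrow> (nat \<Rightarrow> nat) \<Rightarrow> (nat \<times> nat \<Rightarrow> nat) set" where
  "king_tableaux n lam = {T.
      (\<forall>p. p \<notin> cells lam \<longrightarrow> T p = 0) \<and>
      (\<forall>p\<in>cells lam. 1 \<le> T p \<and> T p \<le> 2 * n) \<and>
      (\<forall>r c. (r, c) \<in> cells lam \<and> (r, Suc c) \<in> cells lam \<longrightarrow> T (r, c) \<le> T (r, Suc c)) \<and>
      (\<forall>r c. (r, c) \<in> cells lam \<and> (Suc r, c) \<in> cells lam \<longrightarrow> T (r, c) < T (Suc r, c)) \<and>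
      (\<forall>r c. (r, c) \<in> cells lam \<longrightarrow> 2 * r - 1 \<le> T (r, c))}"

definition count_letter :: "(nat \<Rightarrow> nat) \<Rightarrow> (nat \<times> nat \<Rightarrow> nat) \<Rightarrow> nat \<Rightarrow> nat" where
  "count_letter lam T a = card {p \<in> cells lam. T p = a}"

definition sp_char :: "nat \<Rightarrow> (nat \<Rightarrow> 'a::field) \<Rightarrow> (nat \<Rightarrow> nat) \<Rightarrow> 'a" where
  "sp_char n x lam = (\<Sum>T\<in>king_tableaux n lam.
      \<Prod>i\<in>{1..n}. x i powi (int (count_letter lam T (2 * i - 1)) - int (count_letter lam T (2 * i))))"

end

theory Submission
  imports Defs
begin

text \<open>
  Extend a filling W symmetrically to the square grid and run Fomin's growth diagram for
  RSK on it. Along the staircase boundary, the partitions q(2i-1) at the corner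
  (i, 2n+1-i) and q(2i) at (i, 2n-i) form an up-down sequence
  0 = q(0) < q(1) > q(2) < ... > q(2n), where each step adds or removes a horizontal strip
  and q(2i-1), q(2i) have at most i rows; as the local rule is invertible, this is a
  bijection. The first part at a corner is the maximal weight of an up-right path to
  it (Greene), so L(W) <= u says exactly that all q(k) fit into u columns, and the sizes
  at the corners are rectangle sums of W, which turns wt W into the product of the
  x(i) ^ (2|q(2i-1)| - |q(2i-2)| - |q(2i)|).
  Reflecting each q(2i-1) inside the interval allowed by its two neighbours and then
  complementing every q(k) in the box with ceil(k/2) rows and u columns turns up-down
  sequences into chains 0 = s(0) < s(1) < ... < s(2n) of horizontal strips and lowers
  every exponent by u. These chains are the King symplectic tableaux of shape s(2n),
  s(k) being the shape of the entries <= k; the letters i and i-bar occur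
  |s(2i-1)| - |s(2i-2)| and |s(2i)| - |s(2i-1)| times, which gives back the exponent.
\<close>

section \<open>Partitions and the RSK local rule\<close>

definition is_partition :: "nat \<Rightarrow> (nat \<Rightarrow> nat) \<Rightarrow> bool" where
  "is_partition k p \<longleftrightarrow> p 0 = 0 \<and> (\<forall>r>k. p r = 0) \<and> (\<forall>r\<ge>1. p (Suc r) \<le> p r)"

text \<open>\<open>interlaces a b\<close>: b/a is a horizontal strip.\<close>
definition interlaces :: "(nat \<Rightarrow> nat) \<Rightarrow> (nat \<Rightarrow> nat) \<Rightarrow> bool" where
  "interlaces a b \<longleftrightarrow> (\<forall>r\<ge>1. a r \<le> b r \<and> b (Suc r) \<le> a r)"

definition part_size :: "nat \<Rightarrow> (nat \<Rightarrow> nat) \<Rightarrow> nat" where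
  "part_size N p = (\<Sum>r\<in>{1..N}. p r)"

lemma partitions_le_iff: "lam \<in> partitions_le n \<longleftrightarrow> is_partition n lam"
  unfolding partitions_le_def is_partition_def by auto

lemma partition_zero [simp]: "is_partition k (\<lambda>_. 0)"
  unfolding is_partition_def by auto

lemma partition_mono: "is_partition k p \<Longrightarrow> k \<le> k' \<Longrightarrow> is_partition k' p"
  unfolding is_partition_def by auto

lemma partition_antimono:
  assumes "is_partition k p" "1 \<le> r" "r \<le> s"
  shows "p s \<le> p r"
  using assms(3)
proof (induction s rule: dec_induct)
  case (step s)
  then show ?case using assms(1,2) unfolding is_partition_def by (meson le_trans)
qed simp

lemma partition_le_first: "is_partition k p \<Longrightarrow> p r \<le> p 1"
  by (cases "r = 0") (auto simp: is_partition_def intro: partition_antimono)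

lemma partition_bounded: "is_partition k p \<Longrightarrow> p 1 \<le> u \<Longrightarrow> p r \<le> u"
  using partition_le_first le_trans by blast

lemma part_size_restrict: "is_partition i p \<Longrightarrow> i \<le> n \<Longrightarrow> part_size n p = (\<Sum>r\<in>{1..i}. p r)"
  unfolding part_size_def by (rule sum.mono_neutral_right) (auto simp: is_partition_def)

lemma interlaces_zero [simp]: "interlaces (\<lambda>_. 0) (\<lambda>_. 0)"
  unfolding interlaces_def by auto

lemma interlaces_zero_left: "is_partition 1 p \<Longrightarrow> interlaces (\<lambda>_. 0) p"
  unfolding interlaces_def is_partition_def by auto

lemma interlaces_first: "interlaces a b \<Longrightarrow> a 1 \<le> b 1"
  unfolding interlaces_def by auto

lemma interlaces_partition_right:
  assumes "interlaces a b" "is_partition k a" "b 0 = 0" "\<forall>r>k'. b r = 0"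
  shows "is_partition k' b"
  using assms unfolding interlaces_def is_partition_def by (meson le_trans)

lemma interlaces_partition_left:
  assumes "interlaces a b" "is_partition k b" "a 0 = 0" "\<forall>r>k'. a r = 0"
  shows "is_partition k' a"
  unfolding is_partition_def
proof (intro conjI allI impI)
  fix r :: nat assume "r \<ge> 1"
  have "a (Suc r) \<le> b (Suc r)" "b (Suc r) \<le> a r" using assms(1) \<open>r \<ge> 1\<close> unfolding interlaces_def by auto
  then show "a (Suc r) \<le> a r" by simp
qed (use assms in auto)

text \<open>Fomin's local rule for RSK: the partition at the upper right corner of a cell with
  entry w, from those at the other three corners (p at the lower left).\<close>
definition growth_rule :: "(nat \<Rightarrow> nat) \<Rightarrow> (nat \<Rightarrow> nat) \<Rightarrow> (nat \<Rightarrow> nat) \<Rightarrow> nat \<Rightarrow> (nat \<Rightarrow> nat)" where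
  "growth_rule m v p w = (\<lambda>r. if r = 0 then 0 else if r = 1 then max (m 1) (v 1) + w
      else max (m r) (v r) + min (m (r-1)) (v (r-1)) - p (r-1))"

definition growth_rule_back :: "(nat \<Rightarrow> nat) \<Rightarrow> (nat \<Rightarrow> nat) \<Rightarrow> (nat \<Rightarrow> nat) \<Rightarrow> (nat \<Rightarrow> nat)" where
  "growth_rule_back m v l = (\<lambda>r. if r = 0 then 0 else min (m r) (v r) + max (m (Suc r)) (v (Suc r)) - l (Suc r))"

definition growth_rule_weight :: "(nat \<Rightarrow> nat) \<Rightarrow> (nat \<Rightarrow> nat) \<Rightarrow> (nat \<Rightarrow> nat) \<Rightarrow> nat" where
  "growth_rule_weight m v l = l 1 - max (m 1) (v 1)"

lemma growth_rule_commute: "growth_rule m v p w = growth_rule v m p w"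
  unfolding growth_rule_def by (auto simp: max.commute min.commute)

lemma growth_rule_back_commute: "growth_rule_back m v l = growth_rule_back v m l"
  unfolding growth_rule_back_def by (auto simp: max.commute min.commute)

lemma growth_rule_interlaces1:
  assumes "interlaces p m" "interlaces p v"
  shows "interlaces m (growth_rule m v p w)"
  unfolding interlaces_def
proof (intro allI impI)
  fix r :: nat assume r: "r \<ge> 1"
  have a: "m (Suc r) \<le> p r" "v (Suc r) \<le> p r" "p (r) \<le> m r" "p r \<le> v r"
    using assms r unfolding interlaces_def by auto
  have b: "p (r-1) \<le> m (r-1) \<and> p (r-1) \<le> v (r-1)" if "r \<ge> 2"
  proof -
    have "r - 1 \<ge> 1" using that by arith
    then show ?thesis using assms unfolding interlaces_def by blast
  qed
  show "m r \<le> growth_rule m v p w r \<and> growth_rule m v p w (Suc r) \<le> m r"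
  proof (cases "r = 1")
    case True then show ?thesis using a unfolding growth_rule_def by auto
  next
    case False
    then have "r \<ge> 2" using r by arith
    then show ?thesis using a b[OF \<open>r \<ge> 2\<close>] r unfolding growth_rule_def by (auto simp: max_def min_def)
  qed
qed

lemma growth_rule_interlaces2:
  assumes "interlaces p m" "interlaces p v"
  shows "interlaces v (growth_rule m v p w)"
  using growth_rule_interlaces1[OF assms(2,1)] by (simp add: growth_rule_commute)

lemma growth_rule_back_interlaces1:
  assumes "interlaces m l" "interlaces v l"
  shows "interlaces (growth_rule_back m v l) m"
  unfolding interlaces_def
proof (intro allI impI)
  fix r :: nat assume r: "r \<ge> 1"
  have "l (Suc r) \<le> m r" "l (Suc r) \<le> v r" "m (Suc r) \<le> l (Suc r)" "v (Suc r) \<le> l (Suc r)"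
    using assms r unfolding interlaces_def by auto
  then show "growth_rule_back m v l r \<le> m r \<and> m (Suc r) \<le> growth_rule_back m v l r"
    using r unfolding growth_rule_back_def by auto
qed

lemma growth_rule_back_interlaces2:
  assumes "interlaces m l" "interlaces v l"
  shows "interlaces (growth_rule_back m v l) v"
  using growth_rule_back_interlaces1[OF assms(2,1)] by (simp add: growth_rule_back_commute)

lemma growth_rule_back_growth_rule:
  assumes "interlaces p m" "interlaces p v" "p 0 = 0"
  shows "growth_rule_back m v (growth_rule m v p w) = p"
proof
  fix r
  show "growth_rule_back m v (growth_rule m v p w) r = p r"
  proof (cases "r = 0")
    case True then show ?thesis using assms unfolding growth_rule_back_def by simp
  next
    case False
    have "p r \<le> m r" "p r \<le> v r" "m (Suc r) \<le> p r" "v (Suc r) \<le> p r"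
      using assms False unfolding interlaces_def by auto
    then show ?thesis using False unfolding growth_rule_back_def growth_rule_def by auto
  qed
qed

lemma growth_rule_weight_growth_rule: "growth_rule_weight m v (growth_rule m v p w) = w"
  unfolding growth_rule_weight_def growth_rule_def by simp

lemma growth_rule_growth_rule_back:
  assumes "interlaces m l" "interlaces v l" "l 0 = 0"
  shows "growth_rule m v (growth_rule_back m v l) (growth_rule_weight m v l) = l"
proof
  fix r
  show "growth_rule m v (growth_rule_back m v l) (growth_rule_weight m v l) r = l r"
  proof (cases "r = 0")
    case True then show ?thesis using assms unfolding growth_rule_def by simp
  next
    case False
    show ?thesis
    proof (cases "r = 1")
      case True
      have "m 1 \<le> l 1" "v 1 \<le> l 1" using assms unfolding interlaces_def by auto
      then show ?thesis using True unfolding growth_rule_def growth_rule_weight_def by auto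
    next
      case r1: False
      obtain s where s: "r = Suc s" "s \<ge> 1" using False r1
        by (cases r) auto
      have "l r \<le> m s" "l r \<le> v s" "m r \<le> l r" "v r \<le> l r"
        using assms s unfolding interlaces_def by auto
      then show ?thesis using s unfolding growth_rule_def growth_rule_back_def by auto
    qed
  qed
qed

lemma growth_rule_size_aux:
  assumes "interlaces p m" "interlaces p v" "N \<ge> 1"
  shows "part_size N (growth_rule m v p w) + part_size N p + min (m N) (v N)
       = part_size N m + part_size N v + w + p N"
  using assms(3)
proof (induction N rule: dec_induct)
  case base
  show ?case unfolding part_size_def growth_rule_def by auto
next
  case (step N)
  have le: "p N \<le> m N" "p N \<le> v N" using assms step(1) unfolding interlaces_def by auto
  have "growth_rule m v p w (Suc N) = max (m (Suc N)) (v (Suc N)) + min (m N) (v N) - p N"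
    unfolding growth_rule_def using step(1) by auto
  then show ?case using step(1,3) le by (auto simp: part_size_def max_def min_def)
qed

lemma growth_rule_size:
  assumes "interlaces p m" "interlaces p v" "N \<ge> 1" "growth_rule m v p w (Suc N) = 0"
  shows "part_size N (growth_rule m v p w) + part_size N p = part_size N m + part_size N v + w"
proof -
  have le: "p N \<le> m N" "p N \<le> v N" "m (Suc N) \<le> p N" "v (Suc N) \<le> p N"
    using assms unfolding interlaces_def by auto
  have "growth_rule m v p w (Suc N) = max (m (Suc N)) (v (Suc N)) + min (m N) (v N) - p N"
    unfolding growth_rule_def using assms(3) by auto
  then have "min (m N) (v N) = p N" using assms(4) le by (auto simp: max_def min_def)
  then show ?thesis using growth_rule_size_aux[OF assms(1-3), of w] by simp
qed

section \<open>The growth diagram of a filling\<close>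

lemma sym_induct [case_names sym step]:
  fixes P :: "nat \<Rightarrow> nat \<Rightarrow> bool"
  assumes sym: "\<And>a b. P a b \<Longrightarrow> P b a"
    and step: "\<And>a b. a \<le> b \<Longrightarrow> (\<And>c d. c + d < a + b \<Longrightarrow> P c d) \<Longrightarrow> P a b"
  shows "P a b"
proof (induction "a + b" arbitrary: a b rule: less_induct)
  case less
  show ?case
  proof (cases "a \<le> b")
    case True
    then show ?thesis using step less by blast
  next
    case False
    have "P b a"
    proof (rule step)
      show "b \<le> a" using False by simp
    next
      fix c d assume "c + d < b + a"
      then show "P c d" using less by simp
    qed
    then show ?thesis by (rule sym)
  qed
qed

lemma sym_induct_down [consumes 1, case_names sym step]:
  fixes P :: "nat \<Rightarrow> nat \<Rightarrow> bool"
  assumes "a + b \<le> N"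
    and sym: "\<And>a b. P a b \<Longrightarrow> P b a"
    and step: "\<And>a b. a \<le> b \<Longrightarrow> a + b \<le> N \<Longrightarrow>
                 (\<And>c d. a + b < c + d \<Longrightarrow> c + d \<le> N \<Longrightarrow> P c d) \<Longrightarrow> P a b"
  shows "P a b"
  using assms(1)
proof (induction "N - (a + b)" arbitrary: a b rule: less_induct)
  case less
  have IH: "P c d" if "a + b < c + d" "c + d \<le> N" for c d
    using less.hyps[of c d] that by simp
  show ?case
  proof (cases "a \<le> b")
    case True
    then show ?thesis using step IH less.prems by blast
  next
    case False
    have "P b a"
    proof (rule step)
      show "b \<le> a" "b + a \<le> N" using False less.prems by simp_all
    next
      fix c d assume "b + a < c + d" "c + d \<le> N"
      then show "P c d" using IH by simp
    qed
    then show ?thesis by (rule sym)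
  qed
qed

text \<open>\<open>growth W a b\<close> is the partition at the corner (a, b) of the growth diagram of the
  symmetric extension of W; the diagonal cells (a, a) are ordinary cells of the diagram.\<close>
function growth :: "(nat \<times> nat \<Rightarrow> nat) \<Rightarrow> nat \<Rightarrow> nat \<Rightarrow> (nat \<Rightarrow> nat)" where
  "growth W a b = (if a = 0 \<or> b = 0 then (\<lambda>_. 0) else if b < a then growth W b a
     else growth_rule (growth W (a-1) b) (growth W a (b-1)) (growth W (a-1) (b-1)) (W (a,b)))"
  by auto
termination by (relation "measure (\<lambda>(W,a,b). 2*(a+b) + (if b < a then 1 else 0))") auto

declare growth.simps [simp del]

lemma growth_zero [simp]: "growth W 0 b = (\<lambda>_. 0)" "growth W a 0 = (\<lambda>_. 0)"
  by (subst growth.simps, simp)+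

lemma growth_sym: "growth W a b = growth W b a"
proof (cases a b rule: linorder_cases)
  case less
  then show ?thesis by (cases "a = 0") (simp, subst (2) growth.simps, simp)
next
  case greater
  then show ?thesis by (cases "b = 0") (simp, subst growth.simps, simp)
qed simp

lemma growth_rec:
  "1 \<le> a \<Longrightarrow> a \<le> b \<Longrightarrow>
   growth W a b = growth_rule (growth W (a-1) b) (growth W a (b-1)) (growth W (a-1) (b-1)) (W (a,b))"
  by (subst growth.simps) auto

lemma growth_first:
  "1 \<le> a \<Longrightarrow> a \<le> b \<Longrightarrow> growth W a b 1 = max (growth W (a-1) b 1) (growth W a (b-1) 1) + W (a,b)"
  by (subst growth_rec) (auto simp: growth_rule_def)

definition growth_invariant :: "(nat \<times> nat \<Rightarrow> nat) \<Rightarrow> nat \<Rightarrow> nat \<Rightarrow> bool" where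
  "growth_invariant W a b \<longleftrightarrow> is_partition (min a b) (growth W a b) \<and>
     (a \<ge> 1 \<and> b \<ge> 1 \<longrightarrow> interlaces (growth W (a-1) b) (growth W a b) \<and> interlaces (growth W a (b-1)) (growth W a b))"

lemma growth_invariant_sym: "growth_invariant W a b \<Longrightarrow> growth_invariant W b a"
  unfolding growth_invariant_def by (metis growth_sym min.commute)

lemma growth_invariant_step:
  assumes cd: "1 \<le> c" "c \<le> d" and IH: "growth_invariant W (c-1) d" "growth_invariant W c (d-1)"
  shows "growth_invariant W c d"
proof -
  let ?m = "growth W (c-1) d" and ?v = "growth W c (d-1)" and ?p = "growth W (c-1) (d-1)"
  have pm: "interlaces ?p ?m"
  proof (cases "c = 1")
    case False
    then show ?thesis using IH(1) cd unfolding growth_invariant_def by (simp add: diff_diff_add)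
  qed simp
  have pv: "interlaces ?p ?v"
    using IH(2) cd unfolding growth_invariant_def by (cases "d = 1") auto
  have g: "growth W c d = growth_rule ?m ?v ?p (W (c,d))" using growth_rec[OF cd] .
  have i1: "interlaces ?m (growth W c d)" unfolding g by (rule growth_rule_interlaces1[OF pm pv])
  have i2: "interlaces ?v (growth W c d)" unfolding g by (rule growth_rule_interlaces2[OF pm pv])
  have "min (c-1) d = c-1" using cd by simp
  then have pmt: "is_partition (c-1) ?m" using IH(1) unfolding growth_invariant_def by simp
  have pvt: "is_partition c ?v"
    using IH(2) partition_mono min.cobounded1 unfolding growth_invariant_def by blast
  have z: "\<forall>r>c. growth W c d r = 0"
  proof (intro allI impI)
    fix r assume r: "r > c"
    have "?m r = 0" "?m (r-1) = 0" "?v r = 0" using pmt pvt r cd unfolding is_partition_def by auto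
    then show "growth W c d r = 0" unfolding g growth_rule_def using r cd by auto
  qed
  have "is_partition c (growth W c d)"
    by (rule interlaces_partition_right[OF i1 pmt _ z]) (simp add: g growth_rule_def)
  then show ?thesis using i1 i2 cd unfolding growth_invariant_def by (simp add: min_def)
qed

lemma growth_invariant: "growth_invariant W a b"
proof (induction a b rule: sym_induct)
  case (step a b)
  show ?case
  proof (cases "a = 0")
    case False
    then show ?thesis using growth_invariant_step step by simp
  qed (simp add: growth_invariant_def)
qed (rule growth_invariant_sym)

lemma growth_partition: "is_partition (min a b) (growth W a b)"
  using growth_invariant unfolding growth_invariant_def by blast

lemma growth_interlaces1: "1 \<le> a \<Longrightarrow> interlaces (growth W (a-1) b) (growth W a b)"
  using growth_invariant[of W a b] unfolding growth_invariant_def by (cases "b = 0") auto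

lemma growth_interlaces2: "1 \<le> b \<Longrightarrow> interlaces (growth W a (b-1)) (growth W a b)"
  using growth_invariant[of W a b] unfolding growth_invariant_def by (cases "a = 0") auto

definition sym_filling :: "(nat \<times> nat \<Rightarrow> nat) \<Rightarrow> nat \<times> nat \<Rightarrow> nat" where
  "sym_filling W p = W (min (fst p) (snd p), max (fst p) (snd p))"

definition rect_sum :: "(nat \<times> nat \<Rightarrow> nat) \<Rightarrow> nat \<Rightarrow> nat \<Rightarrow> nat" where
  "rect_sum W a b = (\<Sum>i\<in>{1..a}. \<Sum>j\<in>{1..b}. sym_filling W (i,j))"

lemma rect_sum_sym: "rect_sum W a b = rect_sum W b a"
  unfolding rect_sum_def sym_filling_def
  by (subst sum.swap) (simp add: min.commute max.commute)

lemma rect_sum_rec: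
  "1 \<le> a \<Longrightarrow> 1 \<le> b \<Longrightarrow>
   rect_sum W a b + rect_sum W (a-1) (b-1) = rect_sum W (a-1) b + rect_sum W a (b-1) + sym_filling W (a,b)"
  by (cases a; cases b) (auto simp: rect_sum_def sum.distrib)

lemma rect_sum_row: "1 \<le> i \<Longrightarrow> rect_sum W i b = rect_sum W (i-1) b + (\<Sum>j\<in>{1..b}. sym_filling W (i,j))"
  unfolding rect_sum_def by (cases i) auto

lemma rect_sum_col: "1 \<le> b \<Longrightarrow> rect_sum W i b = rect_sum W i (b-1) + (\<Sum>a\<in>{1..i}. sym_filling W (a,b))"
  unfolding rect_sum_def by (cases b) (auto simp: sum.distrib)

lemma growth_size:
  assumes "1 \<le> n"
  shows "min a b \<le> n \<Longrightarrow> part_size n (growth W a b) = rect_sum W a b"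
proof (induction a b rule: sym_induct)
  case (sym a b)
  then show ?case by (simp add: growth_sym rect_sum_sym min.commute)
next
  case (step c d)
  show ?case
  proof (cases "c = 0")
    case True
    then show ?thesis unfolding rect_sum_def part_size_def by simp
  next
    case False
    then have c1: "c \<ge> 1" by simp
    have pm: "interlaces (growth W (c-1) (d-1)) (growth W (c-1) d)"
      using growth_interlaces2[of d W "c-1"] step c1 by simp
    have pv: "interlaces (growth W (c-1) (d-1)) (growth W c (d-1))"
      using growth_interlaces1[of c W "d-1"] c1 by simp
    have "growth W c d (Suc n) = 0"
      using growth_partition[of c d W] step unfolding is_partition_def by auto
    then have "part_size n (growth W c d) + part_size n (growth W (c-1) (d-1))
             = part_size n (growth W (c-1) d) + part_size n (growth W c (d-1)) + W (c,d)"
      using growth_rule_size[OF pm pv assms] growth_rec[OF c1 step(1)] by simp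
    moreover have "sym_filling W (c,d) = W (c,d)" unfolding sym_filling_def using step by simp
    ultimately show ?thesis
      using rect_sum_rec[of c d W] step.IH[of "c-1" d] step.IH[of c "d-1"] step.IH[of "c-1" "d-1"] c1 step
      by simp
  qed
qed

section \<open>Recovering a filling from its boundary\<close>

text \<open>The boundary of a growth diagram: q(2a-1) is the partition at the corner (a, 2n+1-a)
  and q(2a) the one at (a, 2n-a).\<close>
definition is_updown :: "nat \<Rightarrow> (nat \<Rightarrow> nat \<Rightarrow> nat) \<Rightarrow> bool" where
  "is_updown n q \<longleftrightarrow> q 0 = (\<lambda>_. 0) \<and>
     (\<forall>k\<in>{1..2*n}. is_partition ((k+1) div 2) (q k)) \<and>
     (\<forall>i\<in>{1..n}. interlaces (q (2*i-2)) (q (2*i-1)) \<and> interlaces (q (2*i)) (q (2*i-1)))"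

definition box_seq :: "nat \<Rightarrow> nat \<Rightarrow> (nat \<Rightarrow> nat \<Rightarrow> nat) \<Rightarrow> bool" where
  "box_seq n u q \<longleftrightarrow> (\<forall>k. (k = 0 \<or> 2*n < k) \<longrightarrow> q k = (\<lambda>_. 0)) \<and>
     (\<forall>k\<in>{1..2*n}. is_partition ((k+1) div 2) (q k) \<and> q k 1 \<le> u)"

definition updown_seqs :: "nat \<Rightarrow> nat \<Rightarrow> (nat \<Rightarrow> nat \<Rightarrow> nat) set" where
  "updown_seqs n u = {q. box_seq n u q \<and>
     (\<forall>i\<in>{1..n}. interlaces (q (2*i-2)) (q (2*i-1)) \<and> interlaces (q (2*i)) (q (2*i-1)))}"

lemma updown_seqs_updown: "q \<in> updown_seqs n u \<Longrightarrow> is_updown n q"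
  unfolding updown_seqs_def box_seq_def is_updown_def by auto

function back_growth :: "nat \<Rightarrow> (nat \<Rightarrow> nat \<Rightarrow> nat) \<Rightarrow> nat \<Rightarrow> nat \<Rightarrow> (nat \<Rightarrow> nat)" where
  "back_growth n q a b = (if b < a then back_growth n q b a
     else if a = 0 then (\<lambda>_. 0)
     else if a + b = 2*n+1 then q (2*a-1)
     else if a + b = 2*n then q (2*a)
     else if a + b > 2*n+1 then (\<lambda>_. 0)
     else growth_rule_back (back_growth n q a (b+1)) (back_growth n q (a+1) b) (back_growth n q (a+1) (b+1)))"
  by auto
termination
  by (relation "measure (\<lambda>(n,q,a,b). 2*(2*n+2-(a+b)) + (if b < a then 1 else 0))") auto

declare back_growth.simps [simp del]

lemma back_growth_zero [simp]: "back_growth n q 0 b = (\<lambda>_. 0)" "back_growth n q a 0 = (\<lambda>_. 0)"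
  by (subst back_growth.simps, simp)+

lemma back_growth_sym: "back_growth n q a b = back_growth n q b a"
  by (cases a b rule: linorder_cases) (simp_all add: back_growth.simps[of n q a b] back_growth.simps[of n q b a])

lemma back_growth_odd: "1 \<le> a \<Longrightarrow> a \<le> b \<Longrightarrow> a + b = 2*n+1 \<Longrightarrow> back_growth n q a b = q (2*a-1)"
  by (subst back_growth.simps) simp

lemma back_growth_even: "1 \<le> a \<Longrightarrow> a \<le> b \<Longrightarrow> a + b = 2*n \<Longrightarrow> back_growth n q a b = q (2*a)"
  by (subst back_growth.simps) simp

lemma back_growth_rec:
  "1 \<le> a \<Longrightarrow> a \<le> b \<Longrightarrow> a + b < 2*n \<Longrightarrow>
   back_growth n q a b = growth_rule_back (back_growth n q a (b+1)) (back_growth n q (a+1) b) (back_growth n q (a+1) (b+1))"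
  by (subst back_growth.simps) simp

lemma back_growth_partition_odd:
  assumes "is_updown n q" "a \<le> b" "a + b = 2*n+1"
  shows "is_partition a (back_growth n q a b)"
proof (cases "a = 0")
  case False
  then have "2*a-1 \<in> {1..2*n}" "(2*a-1+1) div 2 = a" using assms by auto
  then have "is_partition a (q (2*a-1))" using assms(1) unfolding is_updown_def by metis
  then show ?thesis using assms back_growth_odd[of a b n q] False by simp
qed simp

definition back_growth_invariant :: "nat \<Rightarrow> (nat \<Rightarrow> nat \<Rightarrow> nat) \<Rightarrow> nat \<Rightarrow> nat \<Rightarrow> bool" where
  "back_growth_invariant n q a b \<longleftrightarrow> is_partition a (back_growth n q a b) \<and>
     interlaces (back_growth n q a b) (back_growth n q (a+1) b) \<and>
     interlaces (back_growth n q a b) (back_growth n q a (b+1))"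

lemma back_growth_invariant_base:
  assumes "is_updown n q" "a \<le> b" "a + b = 2*n" "1 \<le> n"
  shows "back_growth_invariant n q a b"
proof (cases "a = 0")
  case True
  have "is_partition 1 (back_growth n q 1 b)"
    using back_growth_partition_odd[OF assms(1), of 1 b] assms True by auto
  then show ?thesis using True unfolding back_growth_invariant_def by (simp add: interlaces_zero_left)
next
  case False
  have an: "a \<le> n" using assms by simp
  have i2: "interlaces (q (2*a)) (q (2*a-1))" using assms(1) False an unfolding is_updown_def by auto
  have t: "back_growth n q a b = q (2*a)" using back_growth_even[of a b n q] assms False by simp
  have e2: "back_growth n q a (b+1) = q (2*a-1)" using back_growth_odd[of a "b+1" n q] assms False by simp
  have e1: "interlaces (q (2*a)) (back_growth n q (a+1) b)"
  proof (cases "a + 1 \<le> b")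
    case True
    then have "a + 1 \<in> {1..n}" "back_growth n q (a+1) b = q (2*(a+1)-1)"
      using back_growth_odd[of "a+1" b n q] assms by auto
    then show ?thesis using assms(1) unfolding is_updown_def by fastforce
  next
    case False
    then have "b = a" using assms by simp
    then show ?thesis using i2 back_growth_sym[of n q "a+1" a] back_growth_odd[of a "a+1" n q] assms \<open>a \<noteq> 0\<close>
      by simp
  qed
  have "2*a \<in> {1..2*n}" "(2*a+1) div 2 = a" using False an by auto
  then have "is_partition a (q (2*a))" using assms(1) unfolding is_updown_def by fastforce
  then show ?thesis unfolding back_growth_invariant_def t using e1 e2 i2 by simp
qed

lemma growth_rule_back_zero:
  assumes "interlaces v l" "v 0 = 0"
  shows "growth_rule_back (\<lambda>_. 0) v l = (\<lambda>_. 0)"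
proof
  fix r show "growth_rule_back (\<lambda>_. 0) v l r = 0"
    using assms unfolding growth_rule_back_def interlaces_def by (cases "r = 0") auto
qed

lemma back_growth_invariant_step:
  assumes ab: "a \<le> b" "a + b < 2*n"
    and IH1: "back_growth_invariant n q a (b+1)"
    and IH2: "a < b \<Longrightarrow> back_growth_invariant n q (a+1) b"
  shows "back_growth_invariant n q a b"
proof -
  let ?m = "back_growth n q a (b+1)" and ?v = "back_growth n q (a+1) b" and ?l = "back_growth n q (a+1) (b+1)"
  have ilm: "interlaces ?m ?l" and pm: "is_partition a ?m"
    using IH1 unfolding back_growth_invariant_def by simp_all
  have ilv: "interlaces ?v ?l"
  proof (cases "a < b")
    case False
    then have "b = a" using ab by simp
    then show ?thesis using ilm back_growth_sym[of n q "a+1" a] by simp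
  qed (use IH2 in \<open>simp add: back_growth_invariant_def\<close>)
  show ?thesis
  proof (cases "a = 0")
    case True
    have "is_partition 1 ?v"
      using IH2 True by (cases "b = 0") (simp_all add: back_growth_invariant_def)
    then show ?thesis using True unfolding back_growth_invariant_def by (simp add: interlaces_zero_left)
  next
    case False
    have g: "back_growth n q a b = growth_rule_back ?m ?v ?l" using back_growth_rec[of a b n q] False ab by simp
    have i1: "interlaces (back_growth n q a b) ?m" unfolding g by (rule growth_rule_back_interlaces1[OF ilm ilv])
    have i2: "interlaces (back_growth n q a b) ?v" unfolding g by (rule growth_rule_back_interlaces2[OF ilm ilv])
    have z: "\<forall>r>a. back_growth n q a b r = 0"
    proof (intro allI impI)
      fix r assume r: "r > a"
      have "?m r = 0" using pm r unfolding is_partition_def by auto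
      moreover have "?m (Suc r) \<le> ?l (Suc r)" "?v (Suc r) \<le> ?l (Suc r)"
        using ilm ilv r unfolding interlaces_def by auto
      ultimately show "back_growth n q a b r = 0" unfolding g growth_rule_back_def by auto
    qed
    have "is_partition a (back_growth n q a b)"
      by (rule interlaces_partition_left[OF i1 pm _ z]) (simp add: g growth_rule_back_def)
    then show ?thesis unfolding back_growth_invariant_def using i1 i2 by simp
  qed
qed

lemma back_growth_invariant:
  assumes "is_updown n q" "1 \<le> n"
  shows "a \<le> b \<Longrightarrow> a + b \<le> 2*n \<Longrightarrow> back_growth_invariant n q a b"
proof (induction "2*n - (a+b)" arbitrary: a b rule: less_induct)
  case less
  show ?case
  proof (cases "a + b = 2*n")
    case True
    then show ?thesis using back_growth_invariant_base[OF assms(1) _ _ assms(2)] less by simp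
  next
    case False
    then show ?thesis using back_growth_invariant_step less by simp
  qed
qed

lemma back_growth_interlaces1:
  "is_updown n q \<Longrightarrow> 1 \<le> n \<Longrightarrow> a \<le> b \<Longrightarrow> a + b \<le> 2*n \<Longrightarrow>
   interlaces (back_growth n q a b) (back_growth n q (a+1) b)"
  using back_growth_invariant unfolding back_growth_invariant_def by blast

lemma back_growth_interlaces2:
  "is_updown n q \<Longrightarrow> 1 \<le> n \<Longrightarrow> a \<le> b \<Longrightarrow> a + b \<le> 2*n \<Longrightarrow>
   interlaces (back_growth n q a b) (back_growth n q a (b+1))"
  using back_growth_invariant unfolding back_growth_invariant_def by blast

lemma back_growth_partition:
  "is_updown n q \<Longrightarrow> 1 \<le> n \<Longrightarrow> a \<le> b \<Longrightarrow> a + b \<le> 2*n+1 \<Longrightarrow> is_partition a (back_growth n q a b)"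
  using back_growth_invariant[of n q a b] back_growth_partition_odd[of n q a b]
  unfolding back_growth_invariant_def by (cases "a + b = 2*n+1") auto

text \<open>The inverse local rule is also valid for the cells touching the axis, where the
  partitions are empty.\<close>
lemma back_growth_corner:
  assumes "is_updown n q" "1 \<le> n" "a \<le> b" "a + b < 2*n"
  shows "back_growth n q a b = growth_rule_back (back_growth n q a (b+1)) (back_growth n q (a+1) b) (back_growth n q (a+1) (b+1))"
proof (cases "a = 0")
  case False
  then show ?thesis using back_growth_rec[of a b n q] assms by simp
next
  case True
  have "interlaces (back_growth n q 1 b) (back_growth n q 1 (b+1))"
  proof (cases "b = 0")
    case True
    have "is_partition 1 (back_growth n q 1 1)" using back_growth_partition[OF assms(1,2), of 1 1] assms by simp
    then show ?thesis using True by (simp add: interlaces_zero_left)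
  next
    case False
    then show ?thesis using back_growth_interlaces2[OF assms(1,2), of 1 b] assms True by simp
  qed
  moreover have "back_growth n q 1 b 0 = 0"
    using back_growth_partition[OF assms(1,2), of 1 b] back_growth_sym[of n q 1 b] assms True
    by (cases "b = 0") (simp_all add: is_partition_def)
  ultimately show ?thesis using True growth_rule_back_zero by simp
qed

definition filling_of :: "nat \<Rightarrow> (nat \<Rightarrow> nat \<Rightarrow> nat) \<Rightarrow> nat \<times> nat \<Rightarrow> nat" where
  "filling_of n q = (\<lambda>(i,j). if (i,j) \<in> Dp2hlr n
     then growth_rule_weight (back_growth n q (i-1) j) (back_growth n q i (j-1)) (back_growth n q i j) else 0)"

lemma filling_of_fillings: "filling_of n q \<in> fillings n"
  unfolding fillings_def filling_of_def by auto

lemma growth_filling_of: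
  assumes "is_updown n q" "1 \<le> n"
  shows "a + b \<le> 2*n+1 \<Longrightarrow> growth (filling_of n q) a b = back_growth n q a b"
proof (induction a b rule: sym_induct)
  case (sym a b)
  then show ?case by (simp add: growth_sym back_growth_sym add.commute)
next
  case (step c d)
  show ?case
  proof (cases "c = 0")
    case False
    then have c1: "1 \<le> c" by simp
    let ?M = "back_growth n q (c-1) d" and ?V = "back_growth n q c (d-1)"
      and ?L = "back_growth n q c d" and ?P = "back_growth n q (c-1) (d-1)"
    have "(c,d) \<in> Dp2hlr n" using step c1 unfolding Dp2hlr_def by auto
    then have w: "filling_of n q (c,d) = growth_rule_weight ?M ?V ?L" unfolding filling_of_def by simp
    have corner: "?P = growth_rule_back ?M ?V ?L"
      using back_growth_corner[OF assms, of "c-1" "d-1"] step c1 by simp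
    have iM: "interlaces ?M ?L" using back_growth_interlaces1[OF assms, of "c-1" d] step c1 by simp
    have iV: "interlaces ?V ?L"
    proof (cases "c \<le> d - 1")
      case True
      then show ?thesis using back_growth_interlaces2[OF assms, of c "d-1"] step c1 by simp
    next
      case False
      then have "d = c" using step by simp
      then show ?thesis using iM back_growth_sym[of n q c "c-1"] by simp
    qed
    have L0: "?L 0 = 0" using back_growth_partition[OF assms, of c d] step unfolding is_partition_def by simp
    have "growth (filling_of n q) c d = growth_rule ?M ?V ?P (growth_rule_weight ?M ?V ?L)"
      using growth_rec[OF c1 step(1), of "filling_of n q"] step.IH[of "c-1" d] step.IH[of c "d-1"]
        step.IH[of "c-1" "d-1"] step c1 w by simp
    also have "\<dots> = ?L" unfolding corner by (rule growth_rule_growth_rule_back[OF iM iV L0])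
    finally show ?thesis .
  qed simp
qed

definition boundary :: "nat \<Rightarrow> (nat \<times> nat \<Rightarrow> nat) \<Rightarrow> nat \<Rightarrow> nat \<Rightarrow> nat" where
  "boundary n W = (\<lambda>k. if k = 0 \<or> 2*n < k then (\<lambda>_. 0)
     else if odd k then growth W ((k+1) div 2) (2*n+1 - (k+1) div 2)
     else growth W (k div 2) (2*n - k div 2))"

lemma boundary_odd: "1 \<le> a \<Longrightarrow> a \<le> n \<Longrightarrow> boundary n W (2*a-1) = growth W a (2*n+1-a)"
  unfolding boundary_def by auto

lemma boundary_even: "a \<le> n \<Longrightarrow> boundary n W (2*a) = growth W a (2*n-a)"
  unfolding boundary_def by auto

lemma boundary_even_pred: "i \<in> {1..n} \<Longrightarrow> boundary n W (2*i-2) = growth W (i-1) (2*n+1-i)"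
proof (cases "i = 1")
  case False
  assume i: "i \<in> {1..n}"
  have "2*i-2 = 2*(i-1)" "2*n - (i-1) = 2*n+1-i" "i - 1 \<le> n" using i False by auto
  then show ?thesis using boundary_even[of "i-1" n W] by simp
qed (simp add: boundary_def)

lemma boundary_filling_of:
  assumes "q \<in> updown_seqs n u" "1 \<le> n"
  shows "boundary n (filling_of n q) = q"
proof
  fix k
  have U: "is_updown n q" using assms(1) by (rule updown_seqs_updown)
  show "boundary n (filling_of n q) k = q k"
  proof (cases "k = 0 \<or> 2*n < k")
    case True
    then show ?thesis using assms(1) unfolding boundary_def updown_seqs_def box_seq_def by auto
  next
    case False
    show ?thesis
    proof (cases "odd k")
      case True
      then obtain m where "k = 2*m+1" by (auto elim!: oddE)
      then obtain a where a: "k = 2*a-1" "1 \<le> a" "a \<le> n" using False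
        by (intro that[of "m+1"]) auto
      then show ?thesis using boundary_odd[of a n] growth_filling_of[OF U assms(2)]
          back_growth_odd[of a "2*n+1-a" n q] by simp
    next
      case ev: False
      then obtain a where a: "k = 2*a" "1 \<le> a" "a \<le> n" using False by (auto elim!: evenE)
      then show ?thesis using boundary_even[of a n] growth_filling_of[OF U assms(2)]
          back_growth_even[of a "2*n-a" n q] by simp
    qed
  qed
qed

lemma boundary_updown:
  assumes "1 \<le> n"
  shows "is_updown n (boundary n W)"
  unfolding is_updown_def
proof (intro conjI ballI)
  show "boundary n W 0 = (\<lambda>_. 0)" unfolding boundary_def by simp
next
  fix k assume k: "k \<in> {1..2*n}"
  show "is_partition ((k+1) div 2) (boundary n W k)"
  proof (cases "odd k")
    case True
    then obtain a where a: "k = 2*a+1" by (auto elim!: oddE)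
    have "min (a+1) (2*n+1-(a+1)) = a+1" using k a by auto
    then show ?thesis using growth_partition[of "a+1" "2*n+1-(a+1)" W] k a unfolding boundary_def by auto
  next
    case False
    then obtain a where a: "k = 2*a" by (auto elim!: evenE)
    have "min a (2*n-a) = a" using k a by auto
    then show ?thesis using growth_partition[of a "2*n-a" W] k a unfolding boundary_def by auto
  qed
next
  fix i assume i: "i \<in> {1..n}"
  have "1 \<le> 2*n+1-i" using i by auto
  then show "interlaces (boundary n W (2*i-2)) (boundary n W (2*i-1))"
    "interlaces (boundary n W (2*i)) (boundary n W (2*i-1))"
    using boundary_even_pred[OF i] boundary_odd[of i n W] boundary_even[of i n W] i
      growth_interlaces1[of i W "2*n+1-i"] growth_interlaces2[of "2*n+1-i" W i] by simp_all
qed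

lemma back_growth_boundary:
  assumes "1 \<le> n"
  shows "a + b \<le> 2*n+1 \<Longrightarrow> back_growth n (boundary n W) a b = growth W a b"
proof (induction a b rule: sym_induct_down[where N = "2*n+1"])
  case (sym a b)
  then show ?case by (simp add: growth_sym back_growth_sym)
next
  case (step c d)
  consider "c = 0" | "1 \<le> c" "c + d = 2*n+1" | "1 \<le> c" "c + d = 2*n" | "1 \<le> c" "c + d < 2*n"
    using step(2) by linarith
  then show ?case
  proof cases
    case 2
    then have "c \<le> n" "d = 2*n+1-c" using step(1) by simp_all
    then show ?thesis using back_growth_odd[of c d n] boundary_odd[of c n W] step(1) 2 by simp
  next
    case 3
    then have "c \<le> n" "d = 2*n-c" using step(1) by simp_all
    then show ?thesis using back_growth_even[of c d n] boundary_even[of c n W] step(1) 3 by simp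
  next
    case 4
    have "back_growth n (boundary n W) c d
        = growth_rule_back (growth W c (d+1)) (growth W (c+1) d) (growth W (c+1) (d+1))"
      using back_growth_rec[of c d n "boundary n W"] step 4 by simp
    also have "growth W (c+1) (d+1) = growth_rule (growth W c (d+1)) (growth W (c+1) d) (growth W c d) (W (c+1,d+1))"
      using growth_rec[of "c+1" "d+1" W] step(1) by simp
    also have "growth_rule_back (growth W c (d+1)) (growth W (c+1) d) \<dots> = growth W c d"
      using growth_interlaces2[of "d+1" W c] growth_interlaces1[of "c+1" W d] growth_partition[of c d W]
      by (intro growth_rule_back_growth_rule) (auto simp: is_partition_def)
    finally show ?thesis .
  qed simp
qed

lemma filling_of_boundary:
  assumes "W \<in> fillings n" "1 \<le> n"
  shows "filling_of n (boundary n W) = W"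
proof
  fix p :: "nat \<times> nat"
  obtain i j where p: "p = (i,j)" by (cases p)
  show "filling_of n (boundary n W) p = W p"
  proof (cases "(i,j) \<in> Dp2hlr n")
    case False
    then show ?thesis using assms(1) p unfolding filling_of_def fillings_def by auto
  next
    case True
    then have ij: "1 \<le> i" "i \<le> j" "i + j \<le> 2*n+1" unfolding Dp2hlr_def by auto
    then show ?thesis using True p back_growth_boundary[OF assms(2)] growth_rec[OF ij(1,2), of W]
        growth_rule_weight_growth_rule unfolding filling_of_def by simp
  qed
qed

section \<open>Longest paths\<close>

lemma p2hlr_paths_iff:
  "ps \<in> p2hlr_paths n \<longleftrightarrow> ps \<noteq> [] \<and> hd ps = (1, 1) \<and> fst (last ps) + snd (last ps) = 2*n+1 \<and>
     set ps \<subseteq> Dp2hlr n \<and> successively up_right_step ps"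
  unfolding p2hlr_paths_def successively_conv_nth by simp

lemma path_sum_le_growth:
  "ps \<noteq> [] \<Longrightarrow> hd ps = (1,1) \<Longrightarrow> set ps \<subseteq> Dp2hlr n \<Longrightarrow> successively up_right_step ps \<Longrightarrow>
   sum_list (map W ps) \<le> growth W (fst (last ps)) (snd (last ps)) 1"
proof (induction ps rule: rev_induct)
  case (snoc q xs)
  show ?case
  proof (cases "xs = []")
    case True
    then show ?thesis using snoc growth_first[of 1 1 W] by simp
  next
    case False
    obtain a b where q: "q = (a,b)" by (cases q)
    have qD: "1 \<le> a" "a \<le> b" using snoc(4) q unfolding Dp2hlr_def by auto
    have IH: "sum_list (map W xs) \<le> growth W (fst (last xs)) (snd (last xs)) 1"
      using snoc False by (simp add: hd_append successively_append_iff)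
    have "up_right_step (last xs) q" using snoc(5) False by (simp add: successively_append_iff)
    then have "growth W (fst (last xs)) (snd (last xs)) 1 \<le> max (growth W (a-1) b 1) (growth W a (b-1) 1)"
      using q unfolding up_right_step_def by auto
    then show ?thesis using IH growth_first[OF qD, of W] q by simp
  qed
qed simp

text \<open>The maximum in the local rule for first parts is attained at a neighbour inside
  the domain: on the diagonal both neighbours carry the same partition.\<close>
lemma growth_first_pred:
  assumes "(a,b) \<in> Dp2hlr n" "(a,b) \<noteq> (1,1)"
  obtains c d where "(c,d) \<in> Dp2hlr n" "up_right_step (c,d) (a,b)"
    "growth W a b 1 = growth W c d 1 + W (a,b)"
proof -
  have ab: "1 \<le> a" "a \<le> b" "a + b \<le> 2*n+1" using assms(1) unfolding Dp2hlr_def by auto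
  have first: "growth W a b 1 = max (growth W (a-1) b 1) (growth W a (b-1) 1) + W (a,b)"
    using growth_first[OF ab(1,2)] .
  consider "a = 1" | "a = b" "a \<noteq> 1" | "a \<noteq> 1" "a < b" "growth W (a-1) b 1 \<le> growth W a (b-1) 1"
    | "a \<noteq> 1" "a < b" "growth W a (b-1) 1 \<le> growth W (a-1) b 1"
    using ab by linarith
  then show thesis
  proof cases
    case 1
    then have "2 \<le> b" using assms(2) ab by auto
    then show thesis using 1 ab first by (intro that[of 1 "b-1"]) (auto simp: Dp2hlr_def up_right_step_def)
  next
    case 2
    then have "growth W a (b-1) = growth W (a-1) b" using growth_sym by metis
    then show thesis using 2 ab first by (intro that[of "a-1" b]) (auto simp: Dp2hlr_def up_right_step_def)
  next
    case 3
    then show thesis using ab first by (intro that[of a "b-1"]) (auto simp: Dp2hlr_def up_right_step_def)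
  next
    case 4
    then show thesis using ab first by (intro that[of "a-1" b]) (auto simp: Dp2hlr_def up_right_step_def)
  qed
qed

lemma path_sum_eq_growth:
  "(a,b) \<in> Dp2hlr n \<Longrightarrow> \<exists>ps. ps \<noteq> [] \<and> hd ps = (1,1) \<and> last ps = (a,b) \<and> set ps \<subseteq> Dp2hlr n
      \<and> successively up_right_step ps \<and> sum_list (map W ps) = growth W a b 1"
proof (induction "a+b" arbitrary: a b rule: less_induct)
  case less
  show ?case
  proof (cases "(a,b) = (1,1)")
    case True
    then show ?thesis using less(2) growth_first[of 1 1 W] by (intro exI[of _ "[(1,1)]"]) auto
  next
    case False
    then obtain c d where cd: "(c,d) \<in> Dp2hlr n" "up_right_step (c,d) (a,b)"
      "growth W a b 1 = growth W c d 1 + W (a,b)"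
      using growth_first_pred less(2) by blast
    then have "c + d < a + b" unfolding up_right_step_def by auto
    then obtain ps where ps: "ps \<noteq> []" "hd ps = (1,1)" "last ps = (c,d)" "set ps \<subseteq> Dp2hlr n"
      "successively up_right_step ps" "sum_list (map W ps) = growth W c d 1"
      using less(1) cd(1) by blast
    show ?thesis
      using ps cd less(2) by (intro exI[of _ "ps @ [(a,b)]"]) (simp add: hd_append successively_append_iff)
  qed
qed

lemma path_sum_le_boundary:
  assumes "ps \<in> p2hlr_paths n"
  shows "\<exists>a\<in>{1..n}. sum_list (map W ps) \<le> growth W a (2*n+1-a) 1"
proof -
  obtain a b where l: "last ps = (a,b)" by (cases "last ps")
  have "last ps \<in> Dp2hlr n" using assms unfolding p2hlr_paths_def by auto
  then have ab: "1 \<le> a" "a \<le> b" "a + b = 2*n+1" using assms l unfolding Dp2hlr_def p2hlr_paths_def by auto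
  have "sum_list (map W ps) \<le> growth W a b 1"
    using path_sum_le_growth[of ps n W] assms l unfolding p2hlr_paths_iff by auto
  moreover have "a \<le> n" "b = 2*n+1-a" using ab by auto
  ultimately show ?thesis using ab by auto
qed

lemma boundary_first_path_sum:
  assumes "a \<in> {1..n}"
  shows "growth W a (2*n+1-a) 1 \<in> (\<lambda>ps. sum_list (map W ps)) ` p2hlr_paths n"
proof -
  have "(a, 2*n+1-a) \<in> Dp2hlr n" using assms unfolding Dp2hlr_def by auto
  then obtain ps where ps: "ps \<noteq> []" "hd ps = (1,1)" "last ps = (a,2*n+1-a)" "set ps \<subseteq> Dp2hlr n"
    "successively up_right_step ps" "sum_list (map W ps) = growth W a (2*n+1-a) 1"
    using path_sum_eq_growth by blast
  have "ps \<in> p2hlr_paths n" using ps assms unfolding p2hlr_paths_iff by auto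
  then show ?thesis using ps(6) by force
qed

lemma Lp2hlr_le_iff:
  assumes "1 \<le> n"
  shows "Lp2hlr n W \<le> u \<longleftrightarrow> (\<forall>a\<in>{1..n}. growth W a (2*n+1-a) 1 \<le> u)"
proof -
  let ?S = "(\<lambda>ps. sum_list (map W ps)) ` p2hlr_paths n"
  let ?G = "(\<lambda>a. growth W a (2*n+1-a) 1) ` {1..n}"
  have "?S \<subseteq> {..Max ?G}"
  proof
    fix s assume "s \<in> ?S"
    then obtain a where a: "a \<in> {1..n}" "s \<le> growth W a (2*n+1-a) 1" using path_sum_le_boundary by blast
    have "growth W a (2*n+1-a) 1 \<le> Max ?G" using a(1) by (intro Max_ge) auto
    then show "s \<in> {..Max ?G}" using a(2) by simp
  qed
  then have fin: "finite ?S" by (rule finite_subset) simp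
  have ne: "?S \<noteq> {}" using boundary_first_path_sum[of 1 n W] assms by auto
  have "Lp2hlr n W \<le> u \<longleftrightarrow> (\<forall>s\<in>?S. s \<le> u)" unfolding Lp2hlr_def using Max_le_iff[OF fin ne] by simp
  also have "\<dots> \<longleftrightarrow> (\<forall>a\<in>{1..n}. growth W a (2*n+1-a) 1 \<le> u)"
  proof
    assume "\<forall>a\<in>{1..n}. growth W a (2*n+1-a) 1 \<le> u"
    then show "\<forall>s\<in>?S. s \<le> u" using path_sum_le_boundary[of _ n W] by fastforce
  qed (use boundary_first_path_sum in blast)
  finally show ?thesis .
qed

section \<open>The weight of a filling\<close>

text \<open>The exponent of x i in \<open>wt n x W\<close> is \<open>hook_sum n W i + end_sum n W i\<close>: x i is
  the variable of column i, of row i and of row 2n+1-i.\<close>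
definition hook_sum :: "nat \<Rightarrow> (nat \<times> nat \<Rightarrow> nat) \<Rightarrow> nat \<Rightarrow> nat" where
  "hook_sum n W i = (\<Sum>j\<in>{1..2*n+1-i}. sym_filling W (i,j))"
definition end_sum :: "nat \<Rightarrow> (nat \<times> nat \<Rightarrow> nat) \<Rightarrow> nat \<Rightarrow> nat" where
  "end_sum n W i = (\<Sum>a\<in>{1..i}. sym_filling W (a,2*n+1-i))"

lemma Dp2hlr_Sigma: "Dp2hlr n = Sigma {1..n} (\<lambda>i. {i..2*n+1-i})"
  unfolding Dp2hlr_def by auto

lemma finite_Dp2hlr: "finite (Dp2hlr n)"
  unfolding Dp2hlr_Sigma by auto

lemma wt_split:
  fixes x :: "nat \<Rightarrow> 'a::comm_monoid_mult"
  shows "wt n x W = (\<Prod>(i,j)\<in>Dp2hlr n. x i ^ W (i,j)) *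
     (\<Prod>(i,j)\<in>Dp2hlr n. if i < j \<and> j \<le> n then x j ^ W (i,j) else 1) *
     (\<Prod>(i,j)\<in>Dp2hlr n. if n < j then x (2*n+1-j) ^ W (i,j) else 1)"
proof -
  have "wt n x W = (\<Prod>p\<in>Dp2hlr n. (case p of (i,j) \<Rightarrow> x i ^ W (i,j)) *
     (case p of (i,j) \<Rightarrow> if i < j \<and> j \<le> n then x j ^ W (i,j) else 1) *
     (case p of (i,j) \<Rightarrow> if n < j then x (2*n+1-j) ^ W (i,j) else 1))"
    unfolding wt_def
  proof (rule prod.cong[OF refl])
    fix p assume p: "p \<in> Dp2hlr n"
    obtain i j where ij: "p = (i,j)" by (cases p)
    have h: "1 \<le> i" "i \<le> j" "i + j \<le> 2*n+1" using p ij unfolding Dp2hlr_def by auto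
    show "(case p of (i, j) \<Rightarrow> if i \<noteq> j then (x i * yvar n x j) ^ W (i, j) else x i ^ W (i, i)) =
       (case p of (i,j) \<Rightarrow> x i ^ W (i,j)) *
     (case p of (i,j) \<Rightarrow> if i < j \<and> j \<le> n then x j ^ W (i,j) else 1) *
     (case p of (i,j) \<Rightarrow> if n < j then x (2*n+1-j) ^ W (i,j) else 1)"
      using h unfolding ij yvar_def by (auto simp: power_mult_distrib)
  qed
  also have "\<dots> = (\<Prod>(i,j)\<in>Dp2hlr n. x i ^ W (i,j)) *
     (\<Prod>(i,j)\<in>Dp2hlr n. if i < j \<and> j \<le> n then x j ^ W (i,j) else 1) *
     (\<Prod>(i,j)\<in>Dp2hlr n. if n < j then x (2*n+1-j) ^ W (i,j) else 1)"
    by (simp add: prod.distrib)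
  finally show ?thesis .
qed

lemma prod_Dp2hlr_col:
  fixes x :: "nat \<Rightarrow> 'a::comm_monoid_mult"
  shows "(\<Prod>(i,j)\<in>Dp2hlr n. x i ^ W (i,j)) = (\<Prod>i\<in>{1..n}. x i ^ (\<Sum>j\<in>{i..2*n+1-i}. W (i,j)))"
  unfolding Dp2hlr_Sigma by (simp add: prod.Sigma[symmetric] power_sum)

lemma prod_Dp2hlr_lower_row:
  fixes x :: "nat \<Rightarrow> 'a::comm_monoid_mult"
  shows "(\<Prod>(i,j)\<in>Dp2hlr n. if i < j \<and> j \<le> n then x j ^ W (i,j) else 1)
     = (\<Prod>j\<in>{1..n}. x j ^ (\<Sum>i\<in>{1..j-1}. W (i,j)))"
proof -
  let ?D' = "{(i,j). 1 \<le> i \<and> i < j \<and> j \<le> n}"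
  have sub: "?D' \<subseteq> Dp2hlr n" unfolding Dp2hlr_def by auto
  have "(\<Prod>(i,j)\<in>Dp2hlr n. if i < j \<and> j \<le> n then x j ^ W (i,j) else 1)
      = (\<Prod>(i,j)\<in>?D'. if i < j \<and> j \<le> n then x j ^ W (i,j) else 1)"
    by (rule prod.mono_neutral_right[OF finite_Dp2hlr sub]) (auto simp: Dp2hlr_def split: if_splits)
  also have "\<dots> = (\<Prod>(i,j)\<in>?D'. x j ^ W (i,j))"
    by (rule prod.cong) auto
  also have "?D' = (\<lambda>(j,i). (i,j)) ` Sigma {1..n} (\<lambda>j. {1..j-1})" by force
  also have "(\<Prod>(i,j)\<in>\<dots>. x j ^ W (i,j)) = (\<Prod>(j,i)\<in>Sigma {1..n} (\<lambda>j. {1..j-1}). x j ^ W (i,j))"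
    by (subst prod.reindex) (auto simp: inj_on_def case_prod_beta)
  also have "\<dots> = (\<Prod>j\<in>{1..n}. x j ^ (\<Sum>i\<in>{1..j-1}. W (i,j)))"
    by (simp add: prod.Sigma[symmetric] power_sum)
  finally show ?thesis .
qed

lemma prod_Dp2hlr_upper_row:
  fixes x :: "nat \<Rightarrow> 'a::comm_monoid_mult"
  shows "(\<Prod>(i,j)\<in>Dp2hlr n. if n < j then x (2*n+1-j) ^ W (i,j) else 1)
     = (\<Prod>k\<in>{1..n}. x k ^ (\<Sum>i\<in>{1..k}. W (i,2*n+1-k)))"
proof -
  let ?D' = "{(i,j). 1 \<le> i \<and> n < j \<and> i + j \<le> 2*n+1}"
  have sub: "?D' \<subseteq> Dp2hlr n" unfolding Dp2hlr_def by auto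
  have "(\<Prod>(i,j)\<in>Dp2hlr n. if n < j then x (2*n+1-j) ^ W (i,j) else 1)
      = (\<Prod>(i,j)\<in>?D'. if n < j then x (2*n+1-j) ^ W (i,j) else 1)"
    by (rule prod.mono_neutral_right[OF finite_Dp2hlr sub]) (auto simp: Dp2hlr_def split: if_splits)
  also have "\<dots> = (\<Prod>(i,j)\<in>?D'. x (2*n+1-j) ^ W (i,j))"
    by (rule prod.cong) auto
  also have "?D' = (\<lambda>(k,i). (i,2*n+1-k)) ` Sigma {1..n} (\<lambda>k. {1..k})"
  proof
    show "?D' \<subseteq> (\<lambda>(k,i). (i,2*n+1-k)) ` Sigma {1..n} (\<lambda>k. {1..k})"
    proof
      fix p assume "p \<in> ?D'"
      then obtain i j where p: "p = (i,j)" "1 \<le> i" "n < j" "i + j \<le> 2*n+1" by auto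
      then have "(2*n+1-j, i) \<in> Sigma {1..n} (\<lambda>k. {1..k})" "p = (i, 2*n+1-(2*n+1-j))" by auto
      then show "p \<in> (\<lambda>(k,i). (i,2*n+1-k)) ` Sigma {1..n} (\<lambda>k. {1..k})" by force
    qed
  qed auto
  also have "(\<Prod>(i,j)\<in>\<dots>. x (2*n+1-j) ^ W (i,j)) = (\<Prod>(k,i)\<in>Sigma {1..n} (\<lambda>k. {1..k}). x k ^ W (i,2*n+1-k))"
    by (subst prod.reindex) (auto simp: inj_on_def case_prod_beta intro!: prod.cong)
  also have "\<dots> = (\<Prod>k\<in>{1..n}. x k ^ (\<Sum>i\<in>{1..k}. W (i,2*n+1-k)))"
    by (simp add: prod.Sigma[symmetric] power_sum)
  finally show ?thesis .
qed

lemma hook_sum_split: "i \<in> {1..n} \<Longrightarrow> hook_sum n W i = (\<Sum>j\<in>{1..i-1}. W (j,i)) + (\<Sum>j\<in>{i..2*n+1-i}. W (i,j))"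
proof -
  assume i: "i \<in> {1..n}"
  have "{1..2*n+1-i} = {1..i-1} \<union> {i..2*n+1-i}" using i by auto
  then have "hook_sum n W i = (\<Sum>j\<in>{1..i-1}. sym_filling W (i,j)) + (\<Sum>j\<in>{i..2*n+1-i}. sym_filling W (i,j))"
    unfolding hook_sum_def by (simp add: sum.union_disjoint ivl_disj_int)
  also have "(\<Sum>j\<in>{1..i-1}. sym_filling W (i,j)) = (\<Sum>j\<in>{1..i-1}. W (j,i))"
    by (rule sum.cong) (auto simp: sym_filling_def)
  also have "(\<Sum>j\<in>{i..2*n+1-i}. sym_filling W (i,j)) = (\<Sum>j\<in>{i..2*n+1-i}. W (i,j))"
    by (rule sum.cong) (auto simp: sym_filling_def)
  finally show ?thesis .
qed

lemma end_sum_eq: "i \<in> {1..n} \<Longrightarrow> end_sum n W i = (\<Sum>a\<in>{1..i}. W (a,2*n+1-i))"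
  unfolding end_sum_def by (rule sum.cong) (auto simp: sym_filling_def)

lemma wt_hook_end_sums:
  fixes x :: "nat \<Rightarrow> 'a::comm_monoid_mult"
  shows "wt n x W = (\<Prod>i\<in>{1..n}. x i ^ (hook_sum n W i + end_sum n W i))"
proof -
  have "wt n x W = (\<Prod>i\<in>{1..n}. x i ^ (\<Sum>j\<in>{i..2*n+1-i}. W (i,j))) *
      (\<Prod>j\<in>{1..n}. x j ^ (\<Sum>i\<in>{1..j-1}. W (i,j))) * (\<Prod>k\<in>{1..n}. x k ^ (\<Sum>i\<in>{1..k}. W (i,2*n+1-k)))"
    unfolding wt_split prod_Dp2hlr_col prod_Dp2hlr_lower_row prod_Dp2hlr_upper_row ..
  also have "\<dots> = (\<Prod>i\<in>{1..n}. x i ^ ((\<Sum>j\<in>{i..2*n+1-i}. W (i,j)) + (\<Sum>j\<in>{1..i-1}. W (j,i)) + (\<Sum>a\<in>{1..i}. W (a,2*n+1-i))))"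
    by (simp add: prod.distrib[symmetric] power_add)
  also have "\<dots> = (\<Prod>i\<in>{1..n}. x i ^ (hook_sum n W i + end_sum n W i))"
    by (rule prod.cong[OF refl]) (simp add: hook_sum_split end_sum_eq add_ac)
  finally show ?thesis .
qed

definition weight_exp :: "nat \<Rightarrow> (nat \<Rightarrow> nat \<Rightarrow> nat) \<Rightarrow> nat \<Rightarrow> int" where
  "weight_exp n q i = 2 * int (part_size n (q (2*i-1))) - int (part_size n (q (2*i-2))) - int (part_size n (q (2*i)))"

definition seq_weight :: "nat \<Rightarrow> (nat \<Rightarrow> 'a::field) \<Rightarrow> (nat \<Rightarrow> nat \<Rightarrow> nat) \<Rightarrow> 'a" where
  "seq_weight n x q = (\<Prod>i\<in>{1..n}. x i powi weight_exp n q i)"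

lemma weight_exp_boundary:
  assumes "1 \<le> n" "i \<in> {1..n}"
  shows "weight_exp n (boundary n W) i = int (hook_sum n W i + end_sum n W i)"
proof -
  have a: "part_size n (boundary n W (2*i-1)) = rect_sum W i (2*n+1-i)"
    using boundary_odd[of i n W] growth_size[OF assms(1), of i "2*n+1-i" W] assms by simp
  have b: "part_size n (boundary n W (2*i-2)) = rect_sum W (i-1) (2*n+1-i)"
    using boundary_even_pred[OF assms(2), of W] growth_size[OF assms(1), of "i-1" "2*n+1-i" W] assms by simp
  have c: "part_size n (boundary n W (2*i)) = rect_sum W i (2*n-i)"
    using boundary_even[of i n W] growth_size[OF assms(1), of i "2*n-i" W] assms by simp
  have r: "rect_sum W i (2*n+1-i) = rect_sum W (i-1) (2*n+1-i) + hook_sum n W i"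
    using rect_sum_row[of i W "2*n+1-i"] assms unfolding hook_sum_def by simp
  have s: "rect_sum W i (2*n+1-i) = rect_sum W i (2*n-i) + end_sum n W i"
  proof -
    have "1 \<le> 2*n+1-i" "2*n+1-i-1 = 2*n-i" using assms by auto
    then show ?thesis using rect_sum_col[of "2*n+1-i" W i] unfolding end_sum_def by simp
  qed
  show ?thesis unfolding weight_exp_def a b c using r s by simp
qed

lemma wt_seq_weight:
  assumes "1 \<le> n"
  shows "wt n x W = seq_weight n x (boundary n W)"
  unfolding wt_hook_end_sums seq_weight_def
  by (rule prod.cong[OF refl]) (simp only: weight_exp_boundary[OF assms] power_int_of_nat)

lemma filling_of_Lp2hlr_le:
  assumes "q \<in> updown_seqs n u" "1 \<le> n"
  shows "Lp2hlr n (filling_of n q) \<le> u"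
  unfolding Lp2hlr_le_iff[OF assms(2)]
proof
  fix a assume a: "a \<in> {1..n}"
  then have "growth (filling_of n q) a (2*n+1-a) = q (2*a-1)" "2*a-1 \<in> {1..2*n}"
    using growth_filling_of[OF updown_seqs_updown[OF assms(1)] assms(2), of a "2*n+1-a"]
      back_growth_odd[of a "2*n+1-a" n q] by auto
  then show "growth (filling_of n q) a (2*n+1-a) 1 \<le> u" using assms(1) unfolding updown_seqs_def box_seq_def by auto
qed

lemma boundary_updown_seqs:
  assumes "W \<in> fillings n" "Lp2hlr n W \<le> u" "1 \<le> n"
  shows "boundary n W \<in> updown_seqs n u"
proof -
  have odd_le: "growth W a (2*n+1-a) 1 \<le> u" if "a \<in> {1..n}" for a
    using assms that Lp2hlr_le_iff by blast
  have "boundary n W k 1 \<le> u" if k: "k \<in> {1..2*n}" for k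
  proof (cases "odd k")
    case True
    then obtain m where m: "k = 2*m+1" by (auto elim!: oddE)
    then have "m+1 \<in> {1..n}" "boundary n W k = growth W (m+1) (2*n+1-(m+1))"
      using boundary_odd[of "m+1" n W] k by auto
    then show ?thesis using odd_le[of "m+1"] by simp
  next
    case False
    then obtain a where a: "k = 2*a" "a \<in> {1..n}" using k by (auto elim!: evenE)
    then have "1 \<le> 2*n+1-a" "2*n+1-a-1 = 2*n-a" by auto
    then have "growth W a (2*n-a) 1 \<le> growth W a (2*n+1-a) 1"
      using interlaces_first[OF growth_interlaces2[of "2*n+1-a" W a]] by simp
    then show ?thesis using boundary_even[of a n W] odd_le[OF a(2)] a by simp
  qed
  then show ?thesis using boundary_updown[OF assms(3), of W]
    unfolding updown_seqs_def box_seq_def is_updown_def boundary_def by auto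
qed

lemma bij_filling_of:
  assumes "1 \<le> n"
  shows "bij_betw (filling_of n) (updown_seqs n u) {W \<in> fillings n. Lp2hlr n W \<le> u}"
  by (rule bij_betw_byWitness[where f' = "boundary n"])
    (use boundary_filling_of filling_of_boundary filling_of_Lp2hlr_le filling_of_fillings
        boundary_updown_seqs assms in auto)

lemma fillings_sum_eq_updown_sum:
  assumes "1 \<le> n"
  shows "(\<Sum>W\<in>{W \<in> fillings n. Lp2hlr n W \<le> u}. wt n x W) = (\<Sum>q\<in>updown_seqs n u. seq_weight n x q)"
proof -
  have "(\<Sum>W\<in>{W \<in> fillings n. Lp2hlr n W \<le> u}. wt n x W) = (\<Sum>q\<in>updown_seqs n u. wt n x (filling_of n q))"
    using sum.reindex_bij_betw[OF bij_filling_of[OF assms], of "wt n x"] by simp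
  also have "\<dots> = (\<Sum>q\<in>updown_seqs n u. seq_weight n x q)"
    by (rule sum.cong[OF refl]) (simp add: wt_seq_weight[OF assms] boundary_filling_of[OF _ assms])
  finally show ?thesis .
qed

section \<open>From up-down sequences to chains\<close>

definition complement :: "nat \<Rightarrow> nat \<Rightarrow> (nat \<Rightarrow> nat) \<Rightarrow> (nat \<Rightarrow> nat)" where
  "complement u i p = (\<lambda>r. if 1 \<le> r \<and> r \<le> i then u - p (i+1-r) else 0)"

lemma complement_0 [simp]: "complement u 0 p = (\<lambda>_. 0)"
  unfolding complement_def by auto

lemma complement_partition:
  "is_partition i p \<Longrightarrow> is_partition i (complement u i p) \<and> complement u i p 1 \<le> u"
  unfolding is_partition_def[of i "complement u i p"]
proof (intro conjI allI impI)
  assume p: "is_partition i p"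
  fix r :: nat assume r: "1 \<le> r"
  show "complement u i p (Suc r) \<le> complement u i p r"
  proof (cases "Suc r \<le> i")
    case True
    have "p (i+1-r) \<le> p (i+1-Suc r)" using partition_antimono[OF p, of "i+1-Suc r" "i+1-r"] True r by simp
    then show ?thesis unfolding complement_def using True r by auto
  qed (auto simp: complement_def)
qed (auto simp: complement_def)

lemma complement_complement: "is_partition i p \<Longrightarrow> p 1 \<le> u \<Longrightarrow> complement u i (complement u i p) = p"
proof
  fix r assume p: "is_partition i p" "p 1 \<le> u"
  show "complement u i (complement u i p) r = p r"
  proof (cases "1 \<le> r \<and> r \<le> i")
    case True
    then show ?thesis using partition_bounded[OF p, of r] unfolding complement_def by auto
  next
    case False
    then have "p r = 0" using p unfolding is_partition_def by (cases "r = 0") auto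
    then show ?thesis using False unfolding complement_def by auto
  qed
qed

lemma complement_size:
  assumes "is_partition i p" "p 1 \<le> u" "i \<le> n"
  shows "int (part_size n (complement u i p)) = int i * int u - int (part_size n p)"
proof -
  have c: "is_partition i (complement u i p)" using complement_partition[OF assms(1)] by simp
  have "int (part_size n (complement u i p)) = (\<Sum>r\<in>{1..i}. int u - int (p (i+1-r)))"
    unfolding part_size_restrict[OF c assms(3)] using partition_bounded[OF assms(1,2)]
    by (simp add: complement_def of_nat_diff)
  also have "\<dots> = int i * int u - (\<Sum>r\<in>{1..i}. int (p (i+1-r)))"
    by (simp add: sum_subtractf)
  also have "(\<Sum>r\<in>{1..i}. int (p (i+1-r))) = int (part_size n p)"
    using sum.atLeastAtMost_rev[of "\<lambda>r. int (p r)" 1 i] part_size_restrict[OF assms(1,3)] by simp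
  finally show ?thesis .
qed

lemma interlaces_complement_step:
  assumes "interlaces t k" "is_partition (i-1) t" "is_partition i k" "t 1 \<le> u" "k 1 \<le> u"
  shows "interlaces (complement u (i-1) t) (complement u i k)"
  unfolding interlaces_def
proof (intro allI impI)
  fix r :: nat assume r: "1 \<le> r"
  show "complement u (i-1) t r \<le> complement u i k r \<and> complement u i k (Suc r) \<le> complement u (i-1) t r"
  proof (cases "r < i")
    case True
    have "t (i-r) \<le> k (i-r)" "k (Suc (i-r)) \<le> t (i-r)"
      using assms(1)[unfolded interlaces_def, rule_format, of "i-r"] True by auto
    moreover have "Suc (i-r) = i+1-r" "i-1+1-r = i-r" "i+1-Suc r = i-r" using True r by auto
    ultimately show ?thesis
      using True r unfolding complement_def by (simp add: diff_le_mono2)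
  qed (use r in \<open>auto simp: complement_def\<close>)
qed

lemma interlaces_complement_same:
  assumes "interlaces t k" "is_partition i t" "is_partition i k" "t 1 \<le> u" "k 1 \<le> u"
  shows "interlaces (complement u i k) (complement u i t)"
  unfolding interlaces_def
proof (intro allI impI)
  fix r :: nat assume r: "1 \<le> r"
  show "complement u i k r \<le> complement u i t r \<and> complement u i t (Suc r) \<le> complement u i k r"
  proof (cases "r \<le> i")
    case True
    have "t (i+1-r) \<le> k (i+1-r)"
      using assms(1)[unfolded interlaces_def, rule_format, of "i+1-r"] True by auto
    moreover have "k (Suc (i-r)) \<le> t (i-r)" if "r < i"
      using assms(1)[unfolded interlaces_def, rule_format, of "i-r"] that by auto
    moreover have "Suc (i-r) = i+1-r" "i+1-Suc r = i-r" if "r < i" using that by auto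
    ultimately show ?thesis
      using True r unfolding complement_def by (auto simp: diff_le_mono2)
  qed (simp add: complement_def)
qed

text \<open>Given \<open>a \<prec> k \<succ> b\<close> with a of length i-1 and k, b of length i, the admissible k
  are exactly those between \<open>flip_lower a b\<close> and \<open>flip_upper u a b\<close> row by row, and
  \<open>flip\<close> reflects k inside this product of intervals.\<close>
definition flip_lower :: "(nat \<Rightarrow> nat) \<Rightarrow> (nat \<Rightarrow> nat) \<Rightarrow> nat \<Rightarrow> nat" where
  "flip_lower a b r = max (a r) (b r)"

definition flip_upper :: "nat \<Rightarrow> (nat \<Rightarrow> nat) \<Rightarrow> (nat \<Rightarrow> nat) \<Rightarrow> nat \<Rightarrow> nat" where
  "flip_upper u a b r = (if r = 1 then u else min (a (r-1)) (b (r-1)))"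

definition flip :: "nat \<Rightarrow> nat \<Rightarrow> (nat \<Rightarrow> nat) \<Rightarrow> (nat \<Rightarrow> nat) \<Rightarrow> (nat \<Rightarrow> nat) \<Rightarrow> (nat \<Rightarrow> nat)" where
  "flip u i a b k = (\<lambda>r. if 1 \<le> r \<and> r \<le> i then flip_lower a b r + flip_upper u a b r - k r else 0)"

lemma flip_bounds_sum: "1 \<le> i \<Longrightarrow> (\<Sum>r\<in>{1..i}. int (flip_lower a b r + flip_upper u a b r)) =
   int u + (\<Sum>r\<in>{1..i}. int (a r + b r)) - int (min (a i) (b i))"
proof (induction i rule: dec_induct)
  case base show ?case unfolding flip_lower_def flip_upper_def by (simp add: max_def min_def)
next
  case (step i)
  have "flip_lower a b (Suc i) + flip_upper u a b (Suc i) = max (a (Suc i)) (b (Suc i)) + min (a i) (b i)"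
    unfolding flip_lower_def flip_upper_def using step(1) by simp
  then have e: "int (flip_lower a b (Suc i) + flip_upper u a b (Suc i)) = int (a (Suc i)) + int (b (Suc i)) - int (min (a (Suc i)) (b (Suc i))) + int (min (a i) (b i))"
    by (simp add: max_def min_def)
  have "(\<Sum>r\<in>{1..Suc i}. int (flip_lower a b r + flip_upper u a b r)) = (\<Sum>r\<in>{1..i}. int (flip_lower a b r + flip_upper u a b r)) + int (flip_lower a b (Suc i) + flip_upper u a b (Suc i))"
    using step(1) by simp
  also have "\<dots> = int u + (\<Sum>r\<in>{1..i}. int (a r + b r)) - int (min (a i) (b i)) + int (flip_lower a b (Suc i) + flip_upper u a b (Suc i))"
    using step(3) by simp
  also have "\<dots> = int u + (\<Sum>r\<in>{1..Suc i}. int (a r + b r)) - int (min (a (Suc i)) (b (Suc i)))"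
    unfolding e using step(1) by simp
  finally show ?case .
qed

locale flip_setting =
  fixes u i :: nat and a b k :: "nat \<Rightarrow> nat"
  assumes i1: "1 \<le> i" and pa: "is_partition (i-1) a" and pb: "is_partition i b" and pk: "is_partition i k"
    and ia: "interlaces a k" and ib: "interlaces b k" and ku: "k 1 \<le> u"
begin

lemma k_bounds: "1 \<le> r \<Longrightarrow> r \<le> i \<Longrightarrow> flip_lower a b r \<le> k r \<and> k r \<le> flip_upper u a b r"
proof -
  assume r: "1 \<le> r" "r \<le> i"
  have "a r \<le> k r" "b r \<le> k r" using ia ib r unfolding interlaces_def by auto
  moreover have "k r \<le> flip_upper u a b r"
  proof (cases "r = 1")
    case True then show ?thesis using ku unfolding flip_upper_def by simp
  next
    case False
    then obtain s where s: "r = Suc s" "1 \<le> s" using r by (cases r) auto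
    have "k (Suc s) \<le> a s" "k (Suc s) \<le> b s" using ia ib s unfolding interlaces_def by auto
    then show ?thesis using s unfolding flip_upper_def by simp
  qed
  ultimately show ?thesis unfolding flip_lower_def by simp
qed

definition flipped where "flipped = flip u i a b k"

lemma flipped_bounds: "1 \<le> r \<Longrightarrow> r \<le> i \<Longrightarrow> flip_lower a b r \<le> flipped r \<and> flipped r \<le> flip_upper u a b r"
  using k_bounds unfolding flipped_def flip_def by fastforce

lemma flipped_zero: "r = 0 \<or> i < r \<Longrightarrow> flipped r = 0"
  unfolding flipped_def flip_def by auto

lemma a_vanishes: "i \<le> r \<Longrightarrow> a r = 0"
  using pa i1 unfolding is_partition_def by auto

lemma b_vanishes: "i < r \<Longrightarrow> b r = 0"
  using pb unfolding is_partition_def by auto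

lemma interlaces_flipped1: "interlaces a flipped"
  unfolding interlaces_def
proof (intro allI impI conjI)
  fix r :: nat assume r: "1 \<le> r"
  show "a r \<le> flipped r"
  proof (cases "r \<le> i")
    case True then show ?thesis using flipped_bounds[OF r True] unfolding flip_lower_def by simp
  next
    case False then show ?thesis using a_vanishes by simp
  qed
  show "flipped (Suc r) \<le> a r"
  proof (cases "Suc r \<le> i")
    case True then show ?thesis using flipped_bounds[of "Suc r"] r unfolding flip_upper_def by simp
  next
    case False then show ?thesis using flipped_zero by simp
  qed
qed

lemma interlaces_flipped2: "interlaces b flipped"
  unfolding interlaces_def
proof (intro allI impI conjI)
  fix r :: nat assume r: "1 \<le> r"
  show "b r \<le> flipped r"
  proof (cases "r \<le> i")
    case True then show ?thesis using flipped_bounds[OF r True] unfolding flip_lower_def by simp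
  next
    case False then show ?thesis using b_vanishes by simp
  qed
  show "flipped (Suc r) \<le> b r"
  proof (cases "Suc r \<le> i")
    case True then show ?thesis using flipped_bounds[of "Suc r"] r unfolding flip_upper_def by simp
  next
    case False then show ?thesis using flipped_zero by simp
  qed
qed

lemma flipped_partition: "is_partition i flipped"
  by (rule interlaces_partition_right[OF interlaces_flipped1 pa]) (use flipped_zero in auto)

lemma flipped_first: "flipped 1 \<le> u"
  using flipped_bounds[of 1] i1 unfolding flip_upper_def by simp

lemma flip_flip: "flip u i a b flipped = k"
proof
  fix r show "flip u i a b flipped r = k r"
  proof (cases "1 \<le> r \<and> r \<le> i")
    case True
    have "flip_lower a b r \<le> k r \<and> k r \<le> flip_upper u a b r" using k_bounds True by simp
    then show ?thesis using True unfolding flip_def flipped_def by auto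
  next
    case False
    then have "k r = 0" using pk unfolding is_partition_def by (cases "r = 0") auto
    then show ?thesis using False unfolding flip_def by auto
  qed
qed

lemma flipped_size:
  assumes "i \<le> n"
  shows "int (part_size n flipped) = int u + int (part_size n a) + int (part_size n b) - int (part_size n k)"
proof -
  have pa': "is_partition i a" using partition_mono[OF pa] by simp
  have "int (part_size n flipped) = (\<Sum>r\<in>{1..i}. int (flipped r))" using part_size_restrict[OF flipped_partition assms] by simp
  also have "\<dots> = (\<Sum>r\<in>{1..i}. int (flip_lower a b r + flip_upper u a b r) - int (k r))"
  proof (rule sum.cong[OF refl])
    fix r assume r: "r \<in> {1..i}"
    have "k r \<le> flip_lower a b r + flip_upper u a b r" using k_bounds[of r] r by auto
    then show "int (flipped r) = int (flip_lower a b r + flip_upper u a b r) - int (k r)" using r by (simp add: flipped_def flip_def of_nat_diff)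
  qed
  also have "\<dots> = int u + (\<Sum>r\<in>{1..i}. int (a r + b r)) - int (min (a i) (b i)) - (\<Sum>r\<in>{1..i}. int (k r))"
    using flip_bounds_sum[OF i1, of a b u] by (simp add: sum_subtractf)
  also have "min (a i) (b i) = 0" using a_vanishes by simp
  also have "(\<Sum>r\<in>{1..i}. int (a r + b r)) = int (part_size n a) + int (part_size n b)"
    using part_size_restrict[OF pa' assms] part_size_restrict[OF pb assms] by (simp add: sum.distrib)
  also have "(\<Sum>r\<in>{1..i}. int (k r)) = int (part_size n k)"
    using part_size_restrict[OF pk assms] by simp
  finally show ?thesis by simp
qed

end

definition up_seqs :: "nat \<Rightarrow> nat \<Rightarrow> (nat \<Rightarrow> nat \<Rightarrow> nat) set" where
  "up_seqs n u = {s. box_seq n u s \<and> (\<forall>k\<in>{1..2*n}. interlaces (s (k-1)) (s k))}"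

lemma index_cases:
  fixes k :: nat
  assumes "k \<in> {1..2*n}"
  obtains i where "i \<in> {1..n}" "k = 2*i" | i where "i \<in> {1..n}" "k = 2*i-1"
proof (cases "even k")
  case True
  then obtain i where "k = 2*i" by (auto elim!: evenE)
  then show ?thesis using that assms by auto
next
  case False
  then obtain m where "k = 2*m+1" by (auto elim!: oddE)
  then have "m+1 \<in> {1..n}" "k = 2*(m+1)-1" using assms by auto
  then show ?thesis using that by blast
qed

lemma box_seq_even:
  assumes "box_seq n u q" "i \<le> n"
  shows "is_partition i (q (2*i)) \<and> q (2*i) 1 \<le> u"
proof (cases "i = 0")
  case False
  then have "2*i \<in> {1..2*n}" using assms(2) by auto
  then have "is_partition ((2*i+1) div 2) (q (2*i)) \<and> q (2*i) 1 \<le> u"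
    using assms(1) unfolding box_seq_def by blast
  then show ?thesis by simp
qed (use assms(1) in \<open>simp add: box_seq_def\<close>)

lemma box_seq_even_pred:
  assumes "box_seq n u q" "i \<in> {1..n}"
  shows "is_partition (i-1) (q (2*i-2)) \<and> q (2*i-2) 1 \<le> u"
proof -
  have "i - 1 \<le> n" "2*(i-1) = 2*i-2" using assms(2) by auto
  then show ?thesis using box_seq_even[OF assms(1), of "i-1"] by simp
qed

lemma box_seq_odd:
  assumes "box_seq n u q" "i \<in> {1..n}"
  shows "is_partition i (q (2*i-1)) \<and> q (2*i-1) 1 \<le> u"
proof -
  have "2*i-1 \<in> {1..2*n}" "(2*i-1+1) div 2 = i" using assms(2) by auto
  moreover have "is_partition ((2*i-1+1) div 2) (q (2*i-1)) \<and> q (2*i-1) 1 \<le> u"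
    using assms(1) calculation(1) unfolding box_seq_def by blast
  ultimately show ?thesis by simp
qed

lemma box_seqI:
  assumes "\<forall>k. (k = 0 \<or> 2*n < k) \<longrightarrow> q k = (\<lambda>_. 0)"
    and "\<And>i. i \<in> {1..n} \<Longrightarrow> is_partition i (q (2*i)) \<and> q (2*i) 1 \<le> u"
    and "\<And>i. i \<in> {1..n} \<Longrightarrow> is_partition i (q (2*i-1)) \<and> q (2*i-1) 1 \<le> u"
  shows "box_seq n u q"
  unfolding box_seq_def
proof (rule conjI[OF assms(1)], rule ballI)
  fix k assume k: "k \<in> {1..2*n}"
  then show "is_partition ((k+1) div 2) (q k) \<and> q k 1 \<le> u"
  proof (cases rule: index_cases)
    case (1 i)
    then show ?thesis using assms(2)[OF 1(1)] by simp
  next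
    case (2 i)
    then have "(2*i-1+1) div 2 = i" by auto
    then show ?thesis using assms(3)[OF 2(1)] 2 by simp
  qed
qed

definition dual_seq :: "nat \<Rightarrow> nat \<Rightarrow> (nat \<Rightarrow> nat \<Rightarrow> nat) \<Rightarrow> (nat \<Rightarrow> nat \<Rightarrow> nat)" where
  "dual_seq n u q = (\<lambda>k. if k = 0 \<or> 2*n < k then (\<lambda>_. 0) else if even k then complement u (k div 2) (q k)
     else complement u ((k+1) div 2) (flip u ((k+1) div 2) (q (k-1)) (q (k+1)) (q k)))"

definition dual_seq_inv :: "nat \<Rightarrow> nat \<Rightarrow> (nat \<Rightarrow> nat \<Rightarrow> nat) \<Rightarrow> (nat \<Rightarrow> nat \<Rightarrow> nat)" where
  "dual_seq_inv n u s = (\<lambda>k. if k = 0 \<or> 2*n < k then (\<lambda>_. 0) else if even k then complement u (k div 2) (s k)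
     else flip u ((k+1) div 2) (complement u ((k-1) div 2) (s (k-1)))
       (complement u ((k+1) div 2) (s (k+1))) (complement u ((k+1) div 2) (s k)))"

lemma dual_seq_even: "i \<le> n \<Longrightarrow> dual_seq n u q (2*i) = complement u i (q (2*i))"
  unfolding dual_seq_def by auto

lemma dual_seq_even_pred:
  assumes "i \<in> {1..n}"
  shows "dual_seq n u q (2*i-2) = complement u (i-1) (q (2*i-2))"
proof -
  have "i - 1 \<le> n" "2*(i-1) = 2*i-2" using assms by auto
  then show ?thesis using dual_seq_even[of "i-1" n u q] by simp
qed

lemma dual_seq_odd:
  "i \<in> {1..n} \<Longrightarrow> dual_seq n u q (2*i-1) = complement u i (flip u i (q (2*i-2)) (q (2*i)) (q (2*i-1)))"
proof -
  assume i: "i \<in> {1..n}"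
  have "odd (2*i-1)" "(2*i-1+1) div 2 = i" "2*i-1-1 = 2*i-2" "2*i-1+1 = 2*i" using i by auto
  then show ?thesis unfolding dual_seq_def using i by auto
qed

lemma dual_seq_inv_even: "i \<le> n \<Longrightarrow> dual_seq_inv n u s (2*i) = complement u i (s (2*i))"
  unfolding dual_seq_inv_def by auto

lemma dual_seq_inv_even_pred:
  assumes "i \<in> {1..n}"
  shows "dual_seq_inv n u s (2*i-2) = complement u (i-1) (s (2*i-2))"
proof -
  have "i - 1 \<le> n" "2*(i-1) = 2*i-2" using assms by auto
  then show ?thesis using dual_seq_inv_even[of "i-1" n u s] by simp
qed

lemma dual_seq_inv_odd:
  "i \<in> {1..n} \<Longrightarrow> dual_seq_inv n u s (2*i-1) =
   flip u i (complement u (i-1) (s (2*i-2))) (complement u i (s (2*i))) (complement u i (s (2*i-1)))"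
proof -
  assume i: "i \<in> {1..n}"
  have "odd (2*i-1)" "(2*i-1+1) div 2 = i" "2*i-1-1 = 2*i-2" "2*i-1+1 = 2*i" "(2*i-1-1) div 2 = i-1"
    using i by auto
  then show ?thesis unfolding dual_seq_inv_def using i by auto
qed

lemma updown_seqs_flip_setting:
  assumes "q \<in> updown_seqs n u" "i \<in> {1..n}"
  shows "flip_setting u i (q (2*i-2)) (q (2*i)) (q (2*i-1))"
proof -
  have "box_seq n u q" using assms(1) unfolding updown_seqs_def by simp
  then show ?thesis
    using assms box_seq_even_pred box_seq_even[of n u q i] box_seq_odd
    by unfold_locales (auto simp: updown_seqs_def)
qed

lemma up_seqs_flip_setting:
  assumes "s \<in> up_seqs n u" "i \<in> {1..n}"
  shows "flip_setting u i (complement u (i-1) (s (2*i-2))) (complement u i (s (2*i))) (complement u i (s (2*i-1)))"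
proof -
  have box: "box_seq n u s" using assms(1) unfolding up_seqs_def by simp
  have a: "is_partition (i-1) (s (2*i-2))" "s (2*i-2) 1 \<le> u" using box_seq_even_pred[OF box assms(2)] by auto
  have b: "is_partition i (s (2*i))" "s (2*i) 1 \<le> u" using box_seq_even[OF box, of i] assms(2) by auto
  have k: "is_partition i (s (2*i-1))" "s (2*i-1) 1 \<le> u" using box_seq_odd[OF box assms(2)] by auto
  have "2*i-1 \<in> {1..2*n}" "2*i \<in> {1..2*n}" using assms(2) by auto
  then have "interlaces (s (2*i-1-1)) (s (2*i-1))" "interlaces (s (2*i-1)) (s (2*i))"
    using assms(1) unfolding up_seqs_def by blast+
  moreover have "2*i-1-1 = 2*i-2" by simp
  ultimately have il: "interlaces (s (2*i-2)) (s (2*i-1))" "interlaces (s (2*i-1)) (s (2*i))" by simp_all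
  show ?thesis
  proof
    show "interlaces (complement u (i-1) (s (2*i-2))) (complement u i (s (2*i-1)))"
      by (rule interlaces_complement_step[OF il(1) a(1) k(1) a(2) k(2)])
    show "interlaces (complement u i (s (2*i))) (complement u i (s (2*i-1)))"
      by (rule interlaces_complement_same[OF il(2) k(1) b(1) k(2) b(2)])
  qed (use assms(2) complement_partition a(1) b(1) k(1) in auto)
qed

lemma dual_seq_up:
  assumes q: "q \<in> updown_seqs n u"
  shows "dual_seq n u q \<in> up_seqs n u"
proof -
  have box: "box_seq n u q" using q unfolding updown_seqs_def by simp
  have od: "is_partition i (dual_seq n u q (2*i-1)) \<and> dual_seq n u q (2*i-1) 1 \<le> u
      \<and> interlaces (dual_seq n u q (2*i-2)) (dual_seq n u q (2*i-1))
      \<and> interlaces (dual_seq n u q (2*i-1)) (dual_seq n u q (2*i))"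
    if i: "i \<in> {1..n}" for i
  proof -
    interpret F: flip_setting u i "q (2*i-2)" "q (2*i)" "q (2*i-1)" by (rule updown_seqs_flip_setting[OF q i])
    have a: "is_partition (i-1) (q (2*i-2))" "q (2*i-2) 1 \<le> u" using box_seq_even_pred[OF box i] by auto
    have b: "is_partition i (q (2*i))" "q (2*i) 1 \<le> u" using box_seq_even[OF box, of i] i by auto
    have "interlaces (complement u (i-1) (q (2*i-2))) (complement u i F.flipped)"
      by (rule interlaces_complement_step[OF F.interlaces_flipped1 a(1) F.flipped_partition a(2) F.flipped_first])
    moreover have "interlaces (complement u i F.flipped) (complement u i (q (2*i)))"
      by (rule interlaces_complement_same[OF F.interlaces_flipped2 b(1) F.flipped_partition b(2) F.flipped_first])
    ultimately show ?thesis
      using dual_seq_odd[OF i] dual_seq_even_pred[OF i] dual_seq_even[of i n u q] i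
        complement_partition[OF F.flipped_partition, of u] unfolding F.flipped_def by simp
  qed
  have "box_seq n u (dual_seq n u q)"
  proof (rule box_seqI)
    show "is_partition i (dual_seq n u q (2*i)) \<and> dual_seq n u q (2*i) 1 \<le> u" if "i \<in> {1..n}" for i
      using that complement_partition[of i "q (2*i)" u] box_seq_even[OF box, of i] dual_seq_even[of i n u q] by simp
  qed (use od in \<open>auto simp: dual_seq_def\<close>)
  moreover have "interlaces (dual_seq n u q (k-1)) (dual_seq n u q k)" if k: "k \<in> {1..2*n}" for k
  proof (cases rule: index_cases[OF k])
    case (2 i)
    have "2*i-1-1 = 2*i-2" by simp
    then show ?thesis using od[OF 2(1)] 2 by simp
  qed (use od in simp)
  ultimately show ?thesis unfolding up_seqs_def by blast
qed

lemma dual_seq_inv_updown: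
  assumes q: "s \<in> up_seqs n u"
  shows "dual_seq_inv n u s \<in> updown_seqs n u"
proof -
  have box: "box_seq n u s" using q unfolding up_seqs_def by simp
  have od: "is_partition i (dual_seq_inv n u s (2*i-1)) \<and> dual_seq_inv n u s (2*i-1) 1 \<le> u
      \<and> interlaces (dual_seq_inv n u s (2*i-2)) (dual_seq_inv n u s (2*i-1))
      \<and> interlaces (dual_seq_inv n u s (2*i)) (dual_seq_inv n u s (2*i-1))"
    if i: "i \<in> {1..n}" for i
  proof -
    interpret F: flip_setting u i "complement u (i-1) (s (2*i-2))" "complement u i (s (2*i))" "complement u i (s (2*i-1))"
      by (rule up_seqs_flip_setting[OF q i])
    show ?thesis
      using dual_seq_inv_odd[OF i] dual_seq_inv_even_pred[OF i] dual_seq_inv_even[of i n u s] i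
        F.flipped_partition F.flipped_first F.interlaces_flipped1 F.interlaces_flipped2
      unfolding F.flipped_def by simp
  qed
  have "box_seq n u (dual_seq_inv n u s)"
  proof (rule box_seqI)
    show "is_partition i (dual_seq_inv n u s (2*i)) \<and> dual_seq_inv n u s (2*i) 1 \<le> u" if "i \<in> {1..n}" for i
      using that complement_partition[of i "s (2*i)" u] box_seq_even[OF box, of i] dual_seq_inv_even[of i n u s]
      by simp
  qed (use od in \<open>auto simp: dual_seq_inv_def\<close>)
  then show ?thesis unfolding updown_seqs_def using od by blast
qed

lemma dual_seq_inv_dual_seq:
  assumes q: "q \<in> updown_seqs n u"
  shows "dual_seq_inv n u (dual_seq n u q) = q"
proof
  fix k
  have box: "box_seq n u q" using q unfolding updown_seqs_def by simp
  show "dual_seq_inv n u (dual_seq n u q) k = q k"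
  proof (cases "k \<in> {1..2*n}")
    case False
    then show ?thesis using box unfolding dual_seq_inv_def box_seq_def by auto
  next
    case True
    then show ?thesis
    proof (cases rule: index_cases)
      case (1 i)
      then show ?thesis
        using dual_seq_inv_even[of i n u] dual_seq_even[of i n u q] complement_complement box_seq_even[OF box, of i]
        by simp
    next
      case (2 i)
      interpret F: flip_setting u i "q (2*i-2)" "q (2*i)" "q (2*i-1)" by (rule updown_seqs_flip_setting[OF q 2(1)])
      have a: "is_partition (i-1) (q (2*i-2))" "q (2*i-2) 1 \<le> u" using box_seq_even_pred[OF box 2(1)] by auto
      have b: "is_partition i (q (2*i))" "q (2*i) 1 \<le> u" using box_seq_even[OF box, of i] 2 by auto
      have "dual_seq_inv n u (dual_seq n u q) k = flip u i (q (2*i-2)) (q (2*i)) F.flipped"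
        using dual_seq_inv_odd[OF 2(1)] dual_seq_even_pred[OF 2(1)] dual_seq_even[of i n u q] dual_seq_odd[OF 2(1)]
          complement_complement[OF a] complement_complement[OF b]
          complement_complement[OF F.flipped_partition F.flipped_first] 2
        unfolding F.flipped_def by simp
      then show ?thesis using F.flip_flip 2 by simp
    qed
  qed
qed

lemma dual_seq_dual_seq_inv:
  assumes q: "s \<in> up_seqs n u"
  shows "dual_seq n u (dual_seq_inv n u s) = s"
proof
  fix k
  have box: "box_seq n u s" using q unfolding up_seqs_def by simp
  show "dual_seq n u (dual_seq_inv n u s) k = s k"
  proof (cases "k \<in> {1..2*n}")
    case False
    then show ?thesis using box unfolding dual_seq_def box_seq_def by auto
  next
    case True
    then show ?thesis
    proof (cases rule: index_cases)
      case (1 i)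
      then show ?thesis
        using dual_seq_inv_even[of i n u] dual_seq_even[of i n u] complement_complement box_seq_even[OF box, of i]
        by simp
    next
      case (2 i)
      interpret F: flip_setting u i "complement u (i-1) (s (2*i-2))" "complement u i (s (2*i))" "complement u i (s (2*i-1))"
        by (rule up_seqs_flip_setting[OF q 2(1)])
      have "dual_seq n u (dual_seq_inv n u s) k = complement u i (complement u i (s (2*i-1)))"
        using dual_seq_odd[OF 2(1)] dual_seq_inv_even_pred[OF 2(1)] dual_seq_inv_even[of i n u s]
          dual_seq_inv_odd[OF 2(1)] F.flip_flip 2 unfolding F.flipped_def by simp
      then show ?thesis using complement_complement box_seq_odd[OF box 2(1)] 2 by simp
    qed
  qed
qed

lemma weight_exp_dual_seq:
  assumes q: "q \<in> updown_seqs n u" and i: "i \<in> {1..n}"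
  shows "weight_exp n q i = int u + weight_exp n (dual_seq n u q) i"
proof -
  interpret F: flip_setting u i "q (2*i-2)" "q (2*i)" "q (2*i-1)" by (rule updown_seqs_flip_setting[OF q i])
  have box: "box_seq n u q" using q unfolding updown_seqs_def by simp
  have "i - 1 \<le> n" "i \<le> n" using i by auto
  have a: "is_partition (i-1) (q (2*i-2))" "q (2*i-2) 1 \<le> u" using box_seq_even_pred[OF box i] by auto
  have b: "is_partition i (q (2*i))" "q (2*i) 1 \<le> u" using box_seq_even[OF box, of i] i by auto
  have s0: "int (part_size n (dual_seq n u q (2*i-2))) = int (i-1) * int u - int (part_size n (q (2*i-2)))"
    unfolding dual_seq_even_pred[OF i] by (rule complement_size[OF a \<open>i-1 \<le> n\<close>])
  have s2: "int (part_size n (dual_seq n u q (2*i))) = int i * int u - int (part_size n (q (2*i)))"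
    unfolding dual_seq_even[OF \<open>i \<le> n\<close>] by (rule complement_size[OF b \<open>i \<le> n\<close>])
  have s1: "int (part_size n (dual_seq n u q (2*i-1))) = int i * int u - int (part_size n F.flipped)"
    unfolding dual_seq_odd[OF i] F.flipped_def[symmetric]
    by (rule complement_size[OF F.flipped_partition F.flipped_first \<open>i \<le> n\<close>])
  have "int (i-1) = int i - 1" using i by auto
  then show ?thesis unfolding weight_exp_def s0 s1 s2 F.flipped_size[OF \<open>i \<le> n\<close>] by (simp add: algebra_simps)
qed

lemma bij_dual_seq: "bij_betw (dual_seq n u) (updown_seqs n u) (up_seqs n u)"
  by (rule bij_betw_byWitness[where f' = "dual_seq_inv n u"])
    (use dual_seq_inv_dual_seq dual_seq_dual_seq_inv dual_seq_up dual_seq_inv_updown in auto)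

lemma seq_weight_dual_seq:
  assumes "q \<in> updown_seqs n u" "\<forall>i\<in>{1..n}. x i \<noteq> 0"
  shows "seq_weight n x q = (\<Prod>i\<in>{1..n}. x i) ^ u * seq_weight n x (dual_seq n u q)"
proof -
  have "x i powi weight_exp n q i = x i ^ u * x i powi weight_exp n (dual_seq n u q) i" if i: "i \<in> {1..n}" for i
    using weight_exp_dual_seq[OF assms(1) i] power_int_add[of "x i" "int u"] assms(2) i by simp
  then show ?thesis
    unfolding seq_weight_def by (simp add: prod.distrib prod_power_distrib)
qed

lemma updown_sum_eq_up_sum:
  assumes "\<forall>i\<in>{1..n}. x i \<noteq> 0"
  shows "(\<Sum>q\<in>updown_seqs n u. seq_weight n x q) = (\<Prod>i\<in>{1..n}. x i) ^ u * (\<Sum>s\<in>up_seqs n u. seq_weight n x s)"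
proof -
  have "(\<Sum>q\<in>updown_seqs n u. seq_weight n x q)
      = (\<Prod>i\<in>{1..n}. x i) ^ u * (\<Sum>q\<in>updown_seqs n u. seq_weight n x (dual_seq n u q))"
    using seq_weight_dual_seq[OF _ assms] by (simp add: sum_distrib_left)
  also have "(\<Sum>q\<in>updown_seqs n u. seq_weight n x (dual_seq n u q)) = (\<Sum>s\<in>up_seqs n u. seq_weight n x s)"
    using sum.reindex_bij_betw[OF bij_dual_seq, of "seq_weight n x"] by simp
  finally show ?thesis .
qed

section \<open>Chains and King tableaux\<close>

definition shape_le :: "(nat \<times> nat \<Rightarrow> nat) \<Rightarrow> nat \<Rightarrow> nat \<Rightarrow> nat" where
  "shape_le T k r = card {c. 1 \<le> T (r,c) \<and> T (r,c) \<le> k}"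

lemma downclosed_card:
  fixes S :: "nat set"
  assumes "S \<subseteq> {1..L}" "\<And>c c'. c \<in> S \<Longrightarrow> 1 \<le> c' \<Longrightarrow> c' \<le> c \<Longrightarrow> c' \<in> S"
  shows "S = {1..card S}"
proof (cases "S = {}")
  case True then show ?thesis by simp
next
  case False
  have fin: "finite S" using assms(1) finite_subset by blast
  let ?m = "Max S"
  have mS: "?m \<in> S" using Max_in[OF fin False] .
  have "S = {1..?m}"
  proof
    show "S \<subseteq> {1..?m}" using assms(1) Max_ge[OF fin] by auto
    show "{1..?m} \<subseteq> S" using assms(2)[OF mS] by auto
  qed
  moreover have "card {1..?m} = ?m" by simp
  ultimately show ?thesis by simp
qed

locale king_tableau =
  fixes n :: nat and lam :: "nat \<Rightarrow> nat" and T :: "nat \<times> nat \<Rightarrow> nat"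
  assumes lam_partition: "lam \<in> partitions_le n" and T_king: "T \<in> king_tableaux n lam"
begin

lemma T_outside: "p \<notin> cells lam \<Longrightarrow> T p = 0" using T_king unfolding king_tableaux_def by (cases p) auto
lemma T_range: "p \<in> cells lam \<Longrightarrow> 1 \<le> T p \<and> T p \<le> 2*n" using T_king unfolding king_tableaux_def by auto
lemma T_row: "(r,c) \<in> cells lam \<Longrightarrow> (r, Suc c) \<in> cells lam \<Longrightarrow> T (r,c) \<le> T (r, Suc c)"
  using T_king unfolding king_tableaux_def by auto
lemma T_col: "(r,c) \<in> cells lam \<Longrightarrow> (Suc r, c) \<in> cells lam \<Longrightarrow> T (r,c) < T (Suc r, c)"
  using T_king unfolding king_tableaux_def by auto
lemma T_symplectic: "(r,c) \<in> cells lam \<Longrightarrow> 2*r - 1 \<le> T (r,c)"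
  using T_king unfolding king_tableaux_def by auto

lemma lam_Suc_le: "1 \<le> r \<Longrightarrow> lam (Suc r) \<le> lam r"
  using lam_partition unfolding partitions_le_def by auto

lemma T_row_mono: "(r,c) \<in> cells lam \<Longrightarrow> 1 \<le> c' \<Longrightarrow> c' \<le> c \<Longrightarrow> T (r,c') \<le> T (r,c)"
proof (induction c)
  case 0 then show ?case by simp
next
  case (Suc c)
  show ?case
  proof (cases "c' = Suc c")
    case True then show ?thesis by simp
  next
    case False
    then have c: "c' \<le> c" "1 \<le> c" using Suc by auto
    have "(r,c) \<in> cells lam" using Suc(2) c unfolding cells_def by auto
    then show ?thesis using Suc.IH[OF _ Suc(3) c(1)] T_row[of r c] Suc(2) by simp
  qed
qed

lemma shape_le_set: "{c. 1 \<le> T (r,c) \<and> T (r,c) \<le> k} = {c. (r,c) \<in> cells lam \<and> T (r,c) \<le> k}"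
  using T_outside T_range by force

lemma le_shape_le_iff: "1 \<le> c \<Longrightarrow> c \<le> shape_le T k r \<longleftrightarrow> (r,c) \<in> cells lam \<and> T (r,c) \<le> k"
proof -
  assume c: "1 \<le> c"
  let ?S = "{c. (r,c) \<in> cells lam \<and> T (r,c) \<le> k}"
  have "?S = {1..card ?S}"
  proof (rule downclosed_card[where L = "lam r"])
    show "?S \<subseteq> {1..lam r}" unfolding cells_def by auto
  next
    fix x y assume "x \<in> ?S" "1 \<le> y" "y \<le> x"
    then show "y \<in> ?S" using T_row_mono[of r x y] unfolding cells_def by auto
  qed
  then have "c \<in> ?S \<longleftrightarrow> c \<in> {1..card ?S}" by simp
  then show ?thesis unfolding shape_le_def shape_le_set using c by simp
qed

lemma shape_le_0: "shape_le T k 0 = 0"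
proof -
  have "T (0,c) = 0" for c using T_outside[of "(0,c)"] by (auto simp: cells_def)
  then have "{c. 1 \<le> T (0,c) \<and> T (0,c) \<le> k} = {}" by auto
  then show ?thesis unfolding shape_le_def by (metis card.empty)
qed

lemma shape_le_le_shape: "shape_le T k r \<le> lam r"
proof (cases "shape_le T k r = 0")
  case False
  then have "shape_le T k r \<le> shape_le T k r" "1 \<le> shape_le T k r" by auto
  then show ?thesis using le_shape_le_iff[of "shape_le T k r" k r] unfolding cells_def by auto
qed simp

lemma shape_le_full: "shape_le T (2*n) r = lam r"
proof (rule antisym[OF shape_le_le_shape])
  show "lam r \<le> shape_le T (2*n) r"
  proof (cases "lam r = 0")
    case False
    then have "(r, lam r) \<in> cells lam"
    proof -
      have "lam 0 = 0" using lam_partition unfolding partitions_le_def by auto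
      then have "r \<noteq> 0" using False by (cases r) auto
      then show ?thesis using False unfolding cells_def by auto
    qed
    then show ?thesis using le_shape_le_iff[of "lam r" "2*n" r] T_range False by auto
  qed simp
qed

lemma shape_le_zero_rows: "(k+1) div 2 < r \<Longrightarrow> shape_le T k r = 0"
proof (rule ccontr)
  assume r: "(k+1) div 2 < r" and ne: "shape_le T k r \<noteq> 0"
  then have "(r, shape_le T k r) \<in> cells lam \<and> T (r, shape_le T k r) \<le> k" using le_shape_le_iff[of "shape_le T k r" k r] by auto
  then have "2*r - 1 \<le> k" using T_symplectic by fastforce
  then show False using r by arith
qed

lemma shape_le_mono: "k \<le> k' \<Longrightarrow> shape_le T k r \<le> shape_le T k' r"
proof (cases "shape_le T k r = 0")
  case False
  assume kk: "k \<le> k'"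
  have "(r, shape_le T k r) \<in> cells lam \<and> T (r, shape_le T k r) \<le> k" using le_shape_le_iff[of "shape_le T k r" k r] False by auto
  then show ?thesis using le_shape_le_iff[of "shape_le T k r" k' r] kk False by auto
qed simp

lemma shape_le_interlaces: "1 \<le> k \<Longrightarrow> interlaces (shape_le T (k-1)) (shape_le T k)"
  unfolding interlaces_def
proof (intro allI impI conjI)
  fix r :: nat assume k: "1 \<le> k" and r: "1 \<le> r"
  show "shape_le T (k-1) r \<le> shape_le T k r" by (rule shape_le_mono) simp
  show "shape_le T k (Suc r) \<le> shape_le T (k-1) r"
  proof (cases "shape_le T k (Suc r) = 0")
    case False
    let ?c = "shape_le T k (Suc r)"
    have h: "(Suc r, ?c) \<in> cells lam" "T (Suc r, ?c) \<le> k" using le_shape_le_iff[of ?c k "Suc r"] False by auto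
    have rc: "(r, ?c) \<in> cells lam" using h(1) r lam_Suc_le[OF r] unfolding cells_def by auto
    have "T (r, ?c) \<le> k - 1" using T_col[OF rc h(1)] h(2) by simp
    then show ?thesis using le_shape_le_iff[of ?c "k-1" r] rc False by auto
  qed simp
qed

lemma shape_le_partition: "is_partition ((k+1) div 2) (shape_le T k)"
  unfolding is_partition_def
proof (intro conjI allI impI)
  show "shape_le T k 0 = 0" by (rule shape_le_0)
  fix r :: nat
  show "(k+1) div 2 < r \<Longrightarrow> shape_le T k r = 0" by (rule shape_le_zero_rows)
  assume r: "1 \<le> r"
  show "shape_le T k (Suc r) \<le> shape_le T k r"
  proof (cases "shape_le T k (Suc r) = 0")
    case False
    let ?c = "shape_le T k (Suc r)"
    have h: "(Suc r, ?c) \<in> cells lam" "T (Suc r, ?c) \<le> k" using le_shape_le_iff[of ?c k "Suc r"] False by auto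
    have rc: "(r, ?c) \<in> cells lam" using h(1) r lam_Suc_le[OF r] unfolding cells_def by auto
    have "T (r, ?c) \<le> k" using T_col[OF rc h(1)] h(2) by simp
    then show ?thesis using le_shape_le_iff[of ?c k r] rc False by auto
  qed simp
qed

lemma shape_le_zero: "shape_le T 0 = (\<lambda>_. 0)"
proof
  fix r
  show "shape_le T 0 r = (\<lambda>_. 0) r"
  proof (cases "shape_le T 0 r = 0")
    case False
    then show ?thesis using le_shape_le_iff[of "shape_le T 0 r" 0 r] T_range by fastforce
  qed simp
qed

lemma count_letter_shape_le:
  assumes "1 \<le> a"
  shows "int (count_letter lam T a) = int (part_size n (shape_le T a)) - int (part_size n (shape_le T (a-1)))"
proof -
  have lamn: "lam r = 0" if "n < r" for r using lam_partition that unfolding partitions_le_def by auto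
  have eq: "{p \<in> cells lam. T p = a} = Sigma {1..n} (\<lambda>r. {shape_le T (a-1) r<..shape_le T a r})"
  proof (rule set_eqI)
    fix p :: "nat \<times> nat"
    obtain r c where p: "p = (r,c)" by (cases p)
    show "p \<in> {p \<in> cells lam. T p = a} \<longleftrightarrow> p \<in> Sigma {1..n} (\<lambda>r. {shape_le T (a-1) r<..shape_le T a r})"
    proof (cases "1 \<le> c")
      case False then show ?thesis using p unfolding cells_def by auto
    next
      case True
      have i1: "c \<le> shape_le T a r \<longleftrightarrow> (r,c) \<in> cells lam \<and> T (r,c) \<le> a" using le_shape_le_iff[OF True] .
      have i2: "c \<le> shape_le T (a-1) r \<longleftrightarrow> (r,c) \<in> cells lam \<and> T (r,c) \<le> a-1" using le_shape_le_iff[OF True] .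
      have rn: "r \<in> {1..n}" if rc: "(r,c) \<in> cells lam"
      proof -
        have "1 \<le> r" "1 \<le> c" "c \<le> lam r" using rc unfolding cells_def by auto
        moreover have "\<not> n < r" using lamn calculation by fastforce
        ultimately show ?thesis by simp
      qed
      show ?thesis unfolding p using i1 i2 rn assms by auto
    qed
  qed
  have "count_letter lam T a = card (Sigma {1..n} (\<lambda>r. {shape_le T (a-1) r<..shape_le T a r}))"
    unfolding count_letter_def eq ..
  also have "\<dots> = (\<Sum>r\<in>{1..n}. shape_le T a r - shape_le T (a-1) r)" by (simp add: card_SigmaI)
  finally have "int (count_letter lam T a) = (\<Sum>r\<in>{1..n}. int (shape_le T a r) - int (shape_le T (a-1) r))"
    using shape_le_mono[of "a-1" a] by (simp add: of_nat_diff)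
  then show ?thesis unfolding part_size_def by (simp add: sum_subtractf)
qed

end

definition tableau_chain :: "nat \<Rightarrow> (nat \<times> nat \<Rightarrow> nat) \<Rightarrow> nat \<Rightarrow> nat \<Rightarrow> nat" where
  "tableau_chain n T = (\<lambda>k. if 2*n < k then (\<lambda>_. 0) else shape_le T k)"

definition tableau_of :: "(nat \<Rightarrow> nat) \<Rightarrow> (nat \<Rightarrow> nat \<Rightarrow> nat) \<Rightarrow> nat \<times> nat \<Rightarrow> nat" where
  "tableau_of lam s = (\<lambda>(r,c). if (r,c) \<in> cells lam then (LEAST k. c \<le> s k r) else 0)"

lemma (in king_tableau) tableau_chain_up_seqs:
  assumes "lam 1 \<le> u"
  shows "tableau_chain n T \<in> up_seqs n u"
  unfolding up_seqs_def box_seq_def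
proof (intro CollectI conjI allI impI ballI)
  fix k :: nat assume "k = 0 \<or> 2*n < k"
  then show "tableau_chain n T k = (\<lambda>_. 0)" unfolding tableau_chain_def using shape_le_zero by auto
next
  fix k assume k: "k \<in> {1..2*n}"
  show "is_partition ((k+1) div 2) (tableau_chain n T k)" using k shape_le_partition unfolding tableau_chain_def by auto
  show "tableau_chain n T k 1 \<le> u" using k shape_le_le_shape[of k 1] assms unfolding tableau_chain_def by auto
  show "interlaces (tableau_chain n T (k-1)) (tableau_chain n T k)" using k shape_le_interlaces[of k] unfolding tableau_chain_def by auto
qed

lemma (in king_tableau) tableau_chain_full: "tableau_chain n T (2*n) = lam"
  unfolding tableau_chain_def using shape_le_full by auto

lemma (in king_tableau) weight_exp_tableau_chain:
  assumes "i \<in> {1..n}"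
  shows "weight_exp n (tableau_chain n T) i = int (count_letter lam T (2*i-1)) - int (count_letter lam T (2*i))"
proof -
  have "2*i-1-1 = 2*i-2" by simp
  then show ?thesis using count_letter_shape_le[of "2*i-1"] count_letter_shape_le[of "2*i"] assms
    unfolding tableau_chain_def weight_exp_def by auto
qed

locale up_seq =
  fixes n u :: nat and s :: "nat \<Rightarrow> nat \<Rightarrow> nat"
  assumes s_up: "s \<in> up_seqs n u"
begin

definition lam where "lam = s (2*n)"

lemma s_outside: "k = 0 \<or> 2*n < k \<Longrightarrow> s k = (\<lambda>_. 0)" using s_up unfolding up_seqs_def box_seq_def by auto
lemma s_partition: "k \<in> {1..2*n} \<Longrightarrow> is_partition ((k+1) div 2) (s k)" using s_up unfolding up_seqs_def box_seq_def by auto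
lemma s_first_le: "k \<in> {1..2*n} \<Longrightarrow> s k 1 \<le> u" using s_up unfolding up_seqs_def box_seq_def by auto
lemma s_interlaces: "k \<in> {1..2*n} \<Longrightarrow> interlaces (s (k-1)) (s k)" using s_up unfolding up_seqs_def box_seq_def by auto

lemma s_row_0: "s k 0 = 0"
  using s_outside[of k] s_partition[of k] unfolding is_partition_def by (cases "k \<in> {1..2*n}") auto

lemma s_pred_le: "k \<in> {1..2*n} \<Longrightarrow> s (k-1) r \<le> s k r"
  using s_interlaces[of k] s_row_0[of "k-1"] unfolding interlaces_def by (cases "r = 0") auto

lemma s_mono: "k \<le> k' \<Longrightarrow> k' \<le> 2*n \<Longrightarrow> s k r \<le> s k' r"
proof (induction k' rule: dec_induct)
  case base then show ?case by simp
next
  case (step m)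
  have "s m r \<le> s (Suc m) r" using s_pred_le[of "Suc m" r] step by simp
  then show ?case using step by simp
qed

lemma tableau_of_least:
  assumes rc: "(r,c) \<in> cells lam"
  shows "c \<le> s (tableau_of lam s (r,c)) r \<and> tableau_of lam s (r,c) \<le> 2*n \<and> (\<forall>k. c \<le> s k r \<longrightarrow> tableau_of lam s (r,c) \<le> k)"
proof -
  have P: "c \<le> s (2*n) r" using rc unfolding cells_def lam_def by auto
  have t: "tableau_of lam s (r,c) = (LEAST k. c \<le> s k r)" using rc unfolding tableau_of_def by simp
  show ?thesis unfolding t using LeastI[of "\<lambda>k. c \<le> s k r", OF P] Least_le[of "\<lambda>k. c \<le> s k r", OF P]
    Least_le[of "\<lambda>k. c \<le> s k r"] by auto
qed

lemma tableau_of_le_iff: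
  assumes rc: "(r,c) \<in> cells lam" and k: "k \<le> 2*n"
  shows "tableau_of lam s (r,c) \<le> k \<longleftrightarrow> c \<le> s k r"
  using tableau_of_least[OF rc] s_mono[of "tableau_of lam s (r,c)" k r] k le_trans by blast

lemma tableau_of_ge1:
  assumes rc: "(r,c) \<in> cells lam"
  shows "1 \<le> tableau_of lam s (r,c)"
proof (rule ccontr)
  assume "\<not> 1 \<le> tableau_of lam s (r,c)"
  then have "tableau_of lam s (r,c) \<le> 0" by simp
  then have "c \<le> s 0 r" using tableau_of_le_iff[OF rc, of 0] by simp
  moreover have "1 \<le> c" using rc unfolding cells_def by auto
  ultimately show False using s_outside[of 0] by simp
qed

lemma lam_partitions_le: "lam \<in> partitions_le n" and lam_first_le: "lam 1 \<le> u" if "1 \<le> n"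
proof -
  have k: "2*n \<in> {1..2*n}" using that by auto
  have "is_partition n lam" using s_partition[OF k] unfolding lam_def by simp
  then show "lam \<in> partitions_le n" unfolding partitions_le_iff .
  show "lam 1 \<le> u" using s_first_le[OF k] unfolding lam_def by simp
qed

lemma tableau_of_king: "tableau_of lam s \<in> king_tableaux n lam"
  unfolding king_tableaux_def
proof (intro CollectI conjI allI impI ballI)
  fix p :: "nat \<times> nat" assume "p \<notin> cells lam"
  then show "tableau_of lam s p = 0" unfolding tableau_of_def by (cases p) auto
next
  fix p :: "nat \<times> nat" assume p: "p \<in> cells lam"
  obtain r c where rc: "p = (r,c)" by (cases p)
  show "1 \<le> tableau_of lam s p" using tableau_of_ge1 p rc by simp
  show "tableau_of lam s p \<le> 2*n" using tableau_of_least p rc by simp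
next
  fix r c assume h: "(r, c) \<in> cells lam \<and> (r, Suc c) \<in> cells lam"
  let ?k = "tableau_of lam s (r, Suc c)"
  have "Suc c \<le> s ?k r" "?k \<le> 2*n" using tableau_of_least[of r "Suc c"] h by auto
  then show "tableau_of lam s (r,c) \<le> ?k" using tableau_of_le_iff[of r c ?k] h by simp
next
  fix r c assume h: "(r, c) \<in> cells lam \<and> (Suc r, c) \<in> cells lam"
  let ?k = "tableau_of lam s (Suc r, c)"
  have k: "c \<le> s ?k (Suc r)" "?k \<le> 2*n" "1 \<le> ?k" using tableau_of_least[of "Suc r" c] tableau_of_ge1[of "Suc r" c] h by auto
  have r1: "1 \<le> r" using h unfolding cells_def by auto
  have "s ?k (Suc r) \<le> s (?k - 1) r" using s_interlaces[of ?k] k r1 unfolding interlaces_def by auto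
  then have "tableau_of lam s (r,c) \<le> ?k - 1" using tableau_of_le_iff[of r c "?k - 1"] h k by simp
  then show "tableau_of lam s (r,c) < ?k" using k by simp
next
  fix r c assume h: "(r, c) \<in> cells lam"
  let ?k = "tableau_of lam s (r, c)"
  have k: "c \<le> s ?k r" "?k \<le> 2*n" "1 \<le> ?k" using tableau_of_least[OF h] tableau_of_ge1[OF h] by auto
  have c1: "1 \<le> c" using h unfolding cells_def by auto
  have "s ?k r \<noteq> 0" using k c1 by simp
  moreover have "is_partition ((?k+1) div 2) (s ?k)" using s_partition[of ?k] k by simp
  ultimately have "r \<le> (?k+1) div 2" unfolding is_partition_def by (meson not_le)
  then show "2*r - 1 \<le> ?k" by arith
qed

end

lemma nat_eq_by_le:
  assumes "\<And>c. 1 \<le> c \<Longrightarrow> c \<le> a \<longleftrightarrow> c \<le> (b::nat)"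
  shows "a = b"
  using assms[of a] assms[of b] by (cases "a = 0"; cases "b = 0") auto

lemma (in up_seq) shape_le_tableau_of:
  assumes n: "1 \<le> n" and k: "k \<le> 2*n"
  shows "shape_le (tableau_of lam s) k = s k"
proof
  interpret T: king_tableau n lam "tableau_of lam s" using lam_partitions_le[OF n] tableau_of_king by unfold_locales
  fix r
  show "shape_le (tableau_of lam s) k r = s k r"
  proof (cases "r = 0")
    case True
    then show ?thesis using T.shape_le_0 s_row_0 by simp
  next
    case False
    show ?thesis
    proof (rule nat_eq_by_le)
      fix c :: nat assume c: "1 \<le> c"
      have "c \<le> shape_le (tableau_of lam s) k r \<longleftrightarrow> (r,c) \<in> cells lam \<and> tableau_of lam s (r,c) \<le> k"
        using T.le_shape_le_iff[OF c] .
      also have "\<dots> \<longleftrightarrow> (r,c) \<in> cells lam \<and> c \<le> s k r" using tableau_of_le_iff k by blast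
      also have "\<dots> \<longleftrightarrow> c \<le> s k r"
      proof
        assume "c \<le> s k r"
        then have "c \<le> lam r" using s_mono[of k "2*n" r] k unfolding lam_def by simp
        then show "(r,c) \<in> cells lam \<and> c \<le> s k r" using \<open>c \<le> s k r\<close> c False unfolding cells_def by auto
      qed simp
      finally show "c \<le> shape_le (tableau_of lam s) k r \<longleftrightarrow> c \<le> s k r" .
    qed
  qed
qed

lemma (in up_seq) tableau_chain_tableau_of:
  assumes "1 \<le> n"
  shows "tableau_chain n (tableau_of lam s) = s"
proof
  fix k
  show "tableau_chain n (tableau_of lam s) k = s k"
    using s_outside[of k] shape_le_tableau_of[OF assms, of k] unfolding tableau_chain_def by auto
qed

lemma (in king_tableau) tableau_of_tableau_chain: "tableau_of lam (tableau_chain n T) = T"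
proof
  fix p :: "nat \<times> nat"
  obtain r c where p: "p = (r,c)" by (cases p)
  show "tableau_of lam (tableau_chain n T) p = T p"
  proof (cases "p \<in> cells lam")
    case False then show ?thesis using T_outside unfolding tableau_of_def p by simp
  next
    case True
    have c: "1 \<le> c" using True p unfolding cells_def by auto
    have tr: "1 \<le> T (r,c) \<and> T (r,c) \<le> 2*n" using T_range True p by simp
    have "(LEAST k. c \<le> tableau_chain n T k r) = T (r,c)"
    proof (rule Least_equality)
      show "c \<le> tableau_chain n T (T (r,c)) r" using le_shape_le_iff[OF c, of "T (r,c)" r] True p tr unfolding tableau_chain_def by simp
    next
      fix k assume h: "c \<le> tableau_chain n T k r"
      show "T (r,c) \<le> k"
      proof (cases "2*n < k")
        case True then show ?thesis using tr by simp
      next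
        case False then show ?thesis using h le_shape_le_iff[OF c, of k r] unfolding tableau_chain_def by simp
      qed
    qed
    then show ?thesis using True unfolding tableau_of_def p by simp
  qed
qed

lemma bij_tableau_chain:
  assumes lP: "lam \<in> partitions_le n" and lu: "lam 1 \<le> u" and n1: "1 \<le> n"
  shows "bij_betw (tableau_chain n) (king_tableaux n lam) {s \<in> up_seqs n u. s (2*n) = lam}"
proof (rule bij_betw_byWitness[where f' = "tableau_of lam"])
  show "\<forall>T\<in>king_tableaux n lam. tableau_of lam (tableau_chain n T) = T"
    using king_tableau.tableau_of_tableau_chain[of n lam] lP unfolding king_tableau_def by blast
  show "\<forall>s\<in>{s \<in> up_seqs n u. s (2*n) = lam}. tableau_chain n (tableau_of lam s) = s"
  proof
    fix s assume s: "s \<in> {s \<in> up_seqs n u. s (2*n) = lam}"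
    interpret C: up_seq n u s using s by unfold_locales simp
    show "tableau_chain n (tableau_of lam s) = s" using C.tableau_chain_tableau_of[OF n1] s unfolding C.lam_def by simp
  qed
  show "tableau_chain n ` king_tableaux n lam \<subseteq> {s \<in> up_seqs n u. s (2*n) = lam}"
  proof
    fix s assume "s \<in> tableau_chain n ` king_tableaux n lam"
    then obtain T where T: "T \<in> king_tableaux n lam" "s = tableau_chain n T" by blast
    interpret TC: king_tableau n lam T using lP T by unfold_locales
    show "s \<in> {s \<in> up_seqs n u. s (2*n) = lam}" using TC.tableau_chain_up_seqs[OF lu] TC.tableau_chain_full T by simp
  qed
  show "tableau_of lam ` {s \<in> up_seqs n u. s (2*n) = lam} \<subseteq> king_tableaux n lam"
  proof
    fix T assume "T \<in> tableau_of lam ` {s \<in> up_seqs n u. s (2*n) = lam}"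
    then obtain s where s: "s \<in> up_seqs n u" "s (2*n) = lam" "T = tableau_of lam s" by blast
    interpret C: up_seq n u s using s by unfold_locales
    show "T \<in> king_tableaux n lam" using C.tableau_of_king s unfolding C.lam_def by simp
  qed
qed

definition bounded_funs :: "nat \<Rightarrow> nat \<Rightarrow> (nat \<Rightarrow> nat) set" where
  "bounded_funs n u = {f. \<forall>r. (r \<in> {1..n} \<longrightarrow> f r \<in> {..u}) \<and> (r \<notin> {1..n} \<longrightarrow> f r = 0)}"

lemma finite_bounded_funs: "finite (bounded_funs n u)"
  unfolding bounded_funs_def by (rule finite_set_of_finite_funs) auto

lemma partition_bounded_funs: "is_partition k p \<Longrightarrow> k \<le> n \<Longrightarrow> p 1 \<le> u \<Longrightarrow> p \<in> bounded_funs n u"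
  unfolding bounded_funs_def using partition_bounded[of k p u] unfolding is_partition_def
  by (auto simp: Suc_le_eq)

lemma finite_bounded_partitions: "finite {lam \<in> partitions_le n. lam 1 \<le> u}"
  by (rule finite_subset[OF _ finite_bounded_funs[of n u]])
    (auto simp: partitions_le_iff intro: partition_bounded_funs)

lemma finite_up_seqs: "finite (up_seqs n u)"
proof (rule finite_subset)
  show "up_seqs n u \<subseteq> {s. \<forall>k. (k \<in> {1..2*n} \<longrightarrow> s k \<in> bounded_funs n u) \<and> (k \<notin> {1..2*n} \<longrightarrow> s k = (\<lambda>_. 0))}"
  proof (intro subsetI CollectI allI conjI impI)
    fix s k assume s: "s \<in> up_seqs n u"
    show "s k = (\<lambda>_. 0)" if "k \<notin> {1..2*n}"
      using s that unfolding up_seqs_def box_seq_def by (auto simp: Suc_le_eq)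
    assume k: "k \<in> {1..2*n}"
    then have "is_partition ((k+1) div 2) (s k)" "(k+1) div 2 \<le> n" "s k 1 \<le> u"
      using s unfolding up_seqs_def box_seq_def by auto
    then show "s k \<in> bounded_funs n u" by (rule partition_bounded_funs)
  qed
  show "finite {s. \<forall>k. (k \<in> {1..2*n} \<longrightarrow> s k \<in> bounded_funs n u) \<and> (k \<notin> {1..2*n} \<longrightarrow> s k = (\<lambda>_. 0))}"
    by (rule finite_set_of_finite_funs) (simp_all add: finite_bounded_funs)
qed

lemma sp_char_eq_up_sum:
  assumes lam: "lam \<in> partitions_le n" "lam 1 \<le> u" and n: "1 \<le> n"
  shows "sp_char n x lam = (\<Sum>s\<in>{s \<in> up_seqs n u. s (2*n) = lam}. seq_weight n x s)"
proof -
  have "sp_char n x lam = (\<Sum>T\<in>king_tableaux n lam. seq_weight n x (tableau_chain n T))"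
    unfolding sp_char_def seq_weight_def
  proof (intro sum.cong prod.cong refl)
    fix T i assume T: "T \<in> king_tableaux n lam" and i: "i \<in> {1..n}"
    interpret king_tableau n lam T using lam(1) T by unfold_locales
    show "x i powi (int (count_letter lam T (2*i-1)) - int (count_letter lam T (2*i)))
        = x i powi weight_exp n (tableau_chain n T) i"
      using weight_exp_tableau_chain[OF i] by simp
  qed
  also have "\<dots> = (\<Sum>s\<in>{s \<in> up_seqs n u. s (2*n) = lam}. seq_weight n x s)"
    using sum.reindex_bij_betw[OF bij_tableau_chain[OF lam n], of "seq_weight n x"] by simp
  finally show ?thesis .
qed

lemma sp_char_sum_eq_up_sum:
  assumes n: "1 \<le> n"
  shows "(\<Sum>lam\<in>{lam \<in> partitions_le n. lam 1 \<le> u}. sp_char n x lam) = (\<Sum>s\<in>up_seqs n u. seq_weight n x s)"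
proof -
  let ?P = "{lam \<in> partitions_le n. lam 1 \<le> u}"
  have "(\<Sum>lam\<in>?P. sp_char n x lam) = (\<Sum>lam\<in>?P. \<Sum>s\<in>{s \<in> up_seqs n u. s (2*n) = lam}. seq_weight n x s)"
    by (rule sum.cong[OF refl]) (use sp_char_eq_up_sum n in auto)
  also have "\<dots> = (\<Sum>s\<in>up_seqs n u. seq_weight n x s)"
  proof (rule sum.group[OF finite_up_seqs finite_bounded_partitions])
    show "(\<lambda>s. s (2*n)) ` up_seqs n u \<subseteq> ?P"
    proof
      fix lam assume "lam \<in> (\<lambda>s. s (2*n)) ` up_seqs n u"
      then obtain s where s: "s \<in> up_seqs n u" "lam = s (2*n)" by blast
      interpret C: up_seq n u s using s by unfold_locales
      show "lam \<in> ?P" using C.lam_partitions_le[OF n] C.lam_first_le[OF n] s unfolding C.lam_def by simp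
    qed
  qed
  finally show ?thesis .
qed

theorem mainTheorem3:
  fixes n u :: nat and x :: "nat \<Rightarrow> 'a::field"
  assumes "n \<ge> 1"
    and "\<forall>i\<in>{1..n}. x i \<noteq> 0"
  shows "(\<Sum>W\<in>{W \<in> fillings n. Lp2hlr n W \<le> u}. wt n x W)
       = (\<Prod>i\<in>{1..n}. x i) ^ u * (\<Sum>lam\<in>{lam \<in> partitions_le n. lam 1 \<le> u}. sp_char n x lam)"
proof -
  have "(\<Sum>W\<in>{W \<in> fillings n. Lp2hlr n W \<le> u}. wt n x W) = (\<Sum>q\<in>updown_seqs n u. seq_weight n x q)"
    by (rule fillings_sum_eq_updown_sum[OF assms(1)])
  also have "\<dots> = (\<Prod>i\<in>{1..n}. x i) ^ u * (\<Sum>s\<in>up_seqs n u. seq_weight n x s)"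
    by (rule updown_sum_eq_up_sum[OF assms(2)])
  also have "\<dots> = (\<Prod>i\<in>{1..n}. x i) ^ u * (\<Sum>lam\<in>{lam \<in> partitions_le n. lam 1 \<le> u}. sp_char n x lam)"
    by (simp only: sp_char_sum_eq_up_sum[OF assms(1)])
  finally show ?thesis .
qed

end
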